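(* There is a Radon probability measure $\nu$ on $\beta\omega$ such that: (i) $\nu$ is of countable type, i.e. $L^1(\nu)$ is separable; (ii) $\nu(\beta\omega\setminus\omega)=1$; (iii) $\nu(F)=0$ for every closed separable set $F\subseteq\beta\omega\setminus\omega$.
   Context: $\omega=\{0,1,2,\dots\}$ with the discrete topology and $\beta\omega$ is its Čech–Stone compactification. *)

theory Defs
  imports "HOL-Analysis.Analysis" "HOL-Probability.Probability"
begin

definition ultrafilter_nat :: "nat set set \<Rightarrow> bool" where
  "ultrafilter_nat U \<longleftrightarrow>
     UNIV \<in> U \<and> {} \<notin> U \<and>
     (\<forall>A B. A \<in> U \<and> A \<subseteq> B \<longrightarrow> B \<in> U) \<and>
     (\<forall>A B. A \<in> U \<and> B \<in> U \<longrightarrow> A \<inter> B \<in> U) \<and>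
     (\<forall>A. A \<in> U \<or> - A \<in> U)"

text \<open>The Cech-Stone compactification beta omega, realised as the Stone space
  of all ultrafilters on omega, with basic clopen sets {U. A in U}.\<close>
definition beta_omega :: "nat set set set" where
  "beta_omega = {U. ultrafilter_nat U}"

definition beta_omega_top :: "nat set set topology" where
  "beta_omega_top = topology_generated_by {{U \<in> beta_omega. A \<in> U} | A. True}"

definition principal_uf :: "nat \<Rightarrow> nat set set" where
  "principal_uf n = {A. n \<in> A}"

definition omega_in_beta :: "nat set set set" where
  "omega_in_beta = range principal_uf"

definition borel_sets_of :: "'a topology \<Rightarrow> 'a set set" where
  "borel_sets_of X = sigma_sets (topspace X) {U. openin X U}"

definition radon_probability :: "'a topology \<Rightarrow> 'a measure \<Rightarrow> bool" where
  "radon_probability X M \<longleftrightarrow>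
     prob_space M \<and> space M = topspace X \<and> sets M = borel_sets_of X \<and>
     (\<forall>B \<in> sets M. measure M B = (SUP K \<in> {K. compactin X K \<and> K \<subseteq> B}. measure M K))"

definition countable_type :: "'a measure \<Rightarrow> bool" where
  "countable_type M \<longleftrightarrow>
     (\<exists>D :: ('a \<Rightarrow> real) set. countable D \<and> (\<forall>g \<in> D. integrable M g) \<and>
        (\<forall>f. integrable M f \<longrightarrow>
           (\<forall>e>0. \<exists>g \<in> D. (\<integral>x. \<bar>f x - g x\<bar> \<partial>M) < e)))"

end

theory Submission
  imports Defs
begin

text \<open>
  A finitely additive probability \<open>\<mu>\<close> on the subsets of omega induces a Radon probability \<open>\<nu>\<close> on
  beta omega with \<open>\<nu>(clopen_of A) = \<mu>(A)\<close>, by Caratheodory's construction from the outer measure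
  generated by the clopen sets. We take \<open>\<mu>(A) = \<lambda>(h(A))\<close> for a Boolean homomorphism \<open>h\<close> from the
  subsets of omega into the measure algebra of Lebesgue measure \<open>\<lambda>\<close> on \<open>[0,1)\<close> such that \<open>h(A)\<close> is
  almost surely contained in the set of points covered by infinitely many of the dyadic intervals
  coded by elements of \<open>A\<close>; a Sikorski-type extension argument provides \<open>h\<close>. Then \<open>\<mu>\<close> vanishes on
  finite sets, so \<open>\<nu>\<close> is carried by the remainder; the measure algebra of \<open>[0,1)\<close> is separable, so
  countably many subsets of omega approximate all others and \<open>L\<^sup>1(\<nu>)\<close> is separable; and a
  nonprincipal ultrafilter contains sets whose intervals fit into sets of arbitrarily small
  measure, so countably many of them share a member of small \<open>\<mu>\<close>-measure, which makes every
  separable closed subset of the remainder \<open>\<nu>\<close>-null.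
\<close>

section \<open>Ultrafilters on omega and the Stone space beta omega\<close>

lemma uf_UNIV: "ultrafilter_nat U \<Longrightarrow> UNIV \<in> U"
  by (simp add: ultrafilter_nat_def)

lemma uf_empty: "ultrafilter_nat U \<Longrightarrow> {} \<notin> U"
  by (simp add: ultrafilter_nat_def)

lemma uf_mono: "ultrafilter_nat U \<Longrightarrow> A \<in> U \<Longrightarrow> A \<subseteq> B \<Longrightarrow> B \<in> U"
  unfolding ultrafilter_nat_def by blast

lemma uf_Int_iff: "ultrafilter_nat U \<Longrightarrow> A \<inter> B \<in> U \<longleftrightarrow> A \<in> U \<and> B \<in> U"
  unfolding ultrafilter_nat_def by (meson Int_lower1 Int_lower2)

lemma uf_Compl_iff: "ultrafilter_nat U \<Longrightarrow> - A \<in> U \<longleftrightarrow> A \<notin> U"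
  using uf_Int_iff[of U A "- A"] uf_empty[of U] unfolding ultrafilter_nat_def by auto

lemma uf_Un_iff: "ultrafilter_nat U \<Longrightarrow> A \<union> B \<in> U \<longleftrightarrow> A \<in> U \<or> B \<in> U"
  using uf_Int_iff[of U "- A" "- B"] uf_Compl_iff[of U "A \<union> B"] uf_Compl_iff[of U A]
    uf_Compl_iff[of U B] by auto

lemma uf_Union_finite:
  assumes "ultrafilter_nat U" "finite F" "\<Union>F \<in> U"
  shows "\<exists>A\<in>F. A \<in> U"
  using assms(2,3) by (induction F rule: finite_induct) (auto simp: uf_empty uf_Un_iff assms(1))

lemma uf_Inter_finite:
  assumes "ultrafilter_nat U" "finite F" "F \<subseteq> U"
  shows "\<Inter>F \<in> U"
  using assms(2,3) by (induction F rule: finite_induct) (auto simp: uf_UNIV uf_Int_iff assms(1))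

lemma ultrafilter_principal_uf: "ultrafilter_nat (principal_uf n)"
  unfolding ultrafilter_nat_def principal_uf_def by auto

lemma principal_uf_in_beta_omega: "principal_uf n \<in> beta_omega"
  by (simp add: beta_omega_def ultrafilter_principal_uf)

lemma uf_eq_principal_uf:
  assumes U: "ultrafilter_nat U" and n: "{n} \<in> U"
  shows "U = principal_uf n"
proof (intro set_eqI iffI)
  fix A assume "A \<in> U"
  then have "A \<inter> {n} \<noteq> {}" using uf_Int_iff[OF U] n uf_empty[OF U] by metis
  then show "A \<in> principal_uf n" by (simp add: principal_uf_def)
next
  fix A assume "A \<in> principal_uf n"
  then show "A \<in> U" using uf_mono[OF U n] by (simp add: principal_uf_def)
qed

lemma uf_finite_imp_principal:
  assumes U: "ultrafilter_nat U" and "finite F" "F \<in> U"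
  shows "U \<in> omega_in_beta"
proof -
  have "\<Union>((\<lambda>n. {n}) ` F) \<in> U" using assms(3) by simp
  then obtain n where "{n} \<in> U" using uf_Union_finite[OF U] assms(2) by blast
  then have "U = principal_uf n" by (rule uf_eq_principal_uf[OF U])
  then show ?thesis by (simp add: omega_in_beta_def)
qed

lemma nonprincipal_uf_cofinite:
  assumes "ultrafilter_nat U" "U \<notin> omega_in_beta" "finite F"
  shows "- F \<in> U"
  using uf_finite_imp_principal[OF assms(1) assms(3)] assms(2) uf_Compl_iff[OF assms(1)] by blast

definition clopen_of :: "nat set \<Rightarrow> nat set set set" where
  "clopen_of A = {U \<in> beta_omega. A \<in> U}"

lemma clopen_of_subset: "clopen_of A \<subseteq> beta_omega"
  by (auto simp: clopen_of_def)

lemma clopen_of_Int: "clopen_of (A \<inter> B) = clopen_of A \<inter> clopen_of B"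
  by (auto simp: clopen_of_def beta_omega_def uf_Int_iff)

lemma clopen_of_Un: "clopen_of (A \<union> B) = clopen_of A \<union> clopen_of B"
  by (auto simp: clopen_of_def beta_omega_def uf_Un_iff)

lemma clopen_of_Compl: "clopen_of (- A) = beta_omega - clopen_of A"
  by (auto simp: clopen_of_def beta_omega_def uf_Compl_iff)

lemma clopen_of_Diff: "clopen_of (A - B) = clopen_of A - clopen_of B"
proof -
  have "clopen_of (A - B) = clopen_of (A \<inter> - B)" by (simp only: Diff_eq)
  then show ?thesis using clopen_of_subset[of A] by (auto simp: clopen_of_Int clopen_of_Compl)
qed

lemma clopen_of_UNIV: "clopen_of UNIV = beta_omega"
  by (auto simp: clopen_of_def beta_omega_def uf_UNIV)

lemma clopen_of_empty: "clopen_of {} = {}"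
  by (auto simp: clopen_of_def beta_omega_def uf_empty)

lemma clopen_of_subset_iff: "clopen_of A \<subseteq> clopen_of B \<longleftrightarrow> A \<subseteq> B"
proof
  assume sub: "clopen_of A \<subseteq> clopen_of B"
  show "A \<subseteq> B"
  proof
    fix n assume "n \<in> A"
    then have "principal_uf n \<in> clopen_of A"
      using principal_uf_in_beta_omega by (simp add: clopen_of_def principal_uf_def)
    then show "n \<in> B" using sub by (auto simp: clopen_of_def principal_uf_def)
  qed
qed (auto simp: clopen_of_def beta_omega_def intro: uf_mono)

lemma clopen_of_Union: "finite F \<Longrightarrow> clopen_of (\<Union>F) = \<Union>(clopen_of ` F)"
  by (induction F rule: finite_induct) (auto simp: clopen_of_empty clopen_of_Un)

lemma clopen_of_singleton: "clopen_of {n} = {principal_uf n}"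
proof -
  have "{n} \<in> principal_uf n" by (simp add: principal_uf_def)
  then show ?thesis using principal_uf_in_beta_omega[of n] uf_eq_principal_uf[of _ n]
    unfolding clopen_of_def beta_omega_def by blast
qed

lemma omega_in_beta_eq: "omega_in_beta = (\<Union>n. clopen_of {n})"
  by (auto simp: omega_in_beta_def clopen_of_singleton)

lemma beta_omega_top_eq: "beta_omega_top = topology_generated_by (range clopen_of)"
proof -
  have "{{U \<in> beta_omega. A \<in> U} | A. True} = range clopen_of"
    by (auto simp: clopen_of_def)
  then show ?thesis by (simp add: beta_omega_top_def)
qed

lemma topspace_beta_omega_top: "topspace beta_omega_top = beta_omega"
proof -
  have "\<Union>(range clopen_of) = beta_omega" using clopen_of_subset clopen_of_UNIV by blast
  then show ?thesis by (simp add: beta_omega_top_eq)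
qed

lemma openin_beta_omega_top_iff:
  "openin beta_omega_top W \<longleftrightarrow>
     W \<subseteq> beta_omega \<and> (\<forall>U\<in>W. \<exists>A. U \<in> clopen_of A \<and> clopen_of A \<subseteq> W)"
  (is "_ \<longleftrightarrow> ?basic W")
proof
  assume "openin beta_omega_top W"
  then have "generate_topology_on (range clopen_of) W"
    by (simp add: beta_omega_top_eq openin_topology_generated_by_iff)
  then show "?basic W"
  proof (induction rule: generate_topology_on.induct)
    case (Int a b)
    show ?case
    proof (intro conjI ballI)
      fix U assume "U \<in> a \<inter> b"
      then obtain A B where "U \<in> clopen_of A" "clopen_of A \<subseteq> a" "U \<in> clopen_of B" "clopen_of B \<subseteq> b"
        using Int by blast
      then show "\<exists>C. U \<in> clopen_of C \<and> clopen_of C \<subseteq> a \<inter> b"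
        by (intro exI[of _ "A \<inter> B"]) (auto simp: clopen_of_Int)
    qed (use Int in blast)
  next
    case (UN K)
    show ?case
    proof (intro conjI ballI)
      fix U assume "U \<in> \<Union>K"
      then obtain k where "k \<in> K" "U \<in> k" by blast
      then obtain A where "U \<in> clopen_of A" "clopen_of A \<subseteq> k" using UN by blast
      then show "\<exists>A. U \<in> clopen_of A \<and> clopen_of A \<subseteq> \<Union>K" using \<open>k \<in> K\<close> by blast
    qed (use UN in blast)
  qed (use clopen_of_subset in blast)+
next
  assume "?basic W"
  then have "W = \<Union>{clopen_of A | A. clopen_of A \<subseteq> W}" by blast
  moreover have "generate_topology_on (range clopen_of) (\<Union>{clopen_of A | A. clopen_of A \<subseteq> W})"
    by (rule generate_topology_on.UN) (auto intro: generate_topology_on.Basis)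
  ultimately show "openin beta_omega_top W"
    by (simp add: beta_omega_top_eq openin_topology_generated_by_iff)
qed

lemma openin_clopen_of: "openin beta_omega_top (clopen_of A)"
  unfolding openin_beta_omega_top_iff using clopen_of_subset by blast

lemma closedin_clopen_of: "closedin beta_omega_top (clopen_of A)"
  using openin_clopen_of[of "- A"] clopen_of_subset[of A]
  by (simp add: closedin_def topspace_beta_omega_top clopen_of_Compl double_diff)

lemma openin_omega_in_beta: "openin beta_omega_top omega_in_beta"
  unfolding omega_in_beta_eq by (intro openin_Union) (auto intro: openin_clopen_of)

definition fip :: "'a set set \<Rightarrow> bool" where
  "fip G \<longleftrightarrow> (\<forall>F. finite F \<and> F \<subseteq> G \<longrightarrow> \<Inter>F \<noteq> {})"

lemma fip_insert:
  assumes "fip G" "\<And>F. finite F \<Longrightarrow> F \<subseteq> G \<Longrightarrow> \<Inter>F \<inter> A \<noteq> {}"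
  shows "fip (insert A G)"
  unfolding fip_def
proof (intro allI impI)
  fix F assume F: "finite F \<and> F \<subseteq> insert A G"
  show "\<Inter>F \<noteq> {}"
  proof (cases "A \<in> F")
    case True
    then have "\<Inter>F = \<Inter>(F - {A}) \<inter> A" by auto
    then show ?thesis using assms(2)[of "F - {A}"] F by auto
  next
    case False
    then show ?thesis using assms(1) F unfolding fip_def by auto
  qed
qed

lemma fip_Union_chain:
  assumes "C \<noteq> {}" "subset.chain {H. fip H} C"
  shows "fip (\<Union>C)"
  unfolding fip_def
proof (intro allI impI)
  fix F assume F: "finite F \<and> F \<subseteq> \<Union>C"
  then obtain Y where "Y \<in> C" "F \<subseteq> Y"
    using finite_subset_Union_chain[OF _ _ assms] by blast
  then show "\<Inter>F \<noteq> {}" using assms(2) F unfolding fip_def subset.chain_def by blast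
qed

text \<open>By maximality, every set meeting all finite intersections of members is itself a member.\<close>
lemma maximal_fip_ultrafilter:
  assumes fM: "fip M" and max: "\<And>X. fip X \<Longrightarrow> M \<subseteq> X \<Longrightarrow> X = M"
  shows "ultrafilter_nat M"
proof -
  have add: "A \<in> M" if "\<And>F. finite F \<Longrightarrow> F \<subseteq> M \<Longrightarrow> \<Inter>F \<inter> A \<noteq> {}" for A
    using max[OF fip_insert[OF fM that]] by blast
  have meets: "\<Inter>F \<noteq> {}" if "finite F" "F \<subseteq> M" for F
    using fM that unfolding fip_def by blast
  show ?thesis
    unfolding ultrafilter_nat_def
  proof (intro conjI allI impI)
    show "UNIV \<in> M" by (rule add) (use meets in auto)
    show "{} \<notin> M" using meets[of "{{}}"] by auto
  next
    fix A B assume h: "A \<in> M \<and> A \<subseteq> B"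
    show "B \<in> M"
    proof (rule add)
      fix F assume "finite F" "F \<subseteq> M"
      then show "\<Inter>F \<inter> B \<noteq> {}" using meets[of "insert A F"] h by auto
    qed
  next
    fix A B assume h: "A \<in> M \<and> B \<in> M"
    show "A \<inter> B \<in> M"
    proof (rule add)
      fix F assume "finite F" "F \<subseteq> M"
      then show "\<Inter>F \<inter> (A \<inter> B) \<noteq> {}" using meets[of "insert A (insert B F)"] h by auto
    qed
  next
    fix A
    show "A \<in> M \<or> - A \<in> M"
    proof (rule ccontr)
      assume "\<not> (A \<in> M \<or> - A \<in> M)"
      then obtain F1 F2 where "finite F1" "F1 \<subseteq> M" "\<Inter>F1 \<inter> A = {}"
        and "finite F2" "F2 \<subseteq> M" "\<Inter>F2 \<inter> - A = {}"
        using add[of A] add[of "- A"] by blast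
      then have "\<Inter>(F1 \<union> F2) = {}" by blast
      then show False using meets[of "F1 \<union> F2"] \<open>finite F1\<close> \<open>finite F2\<close> \<open>F1 \<subseteq> M\<close> \<open>F2 \<subseteq> M\<close>
        by auto
    qed
  qed
qed

lemma ultrafilter_lemma:
  assumes "fip G"
  shows "\<exists>U. ultrafilter_nat U \<and> G \<subseteq> U"
proof -
  define Z where "Z = {H. G \<subseteq> H \<and> fip H}"
  have "\<exists>M\<in>Z. \<forall>X\<in>Z. M \<subseteq> X \<longrightarrow> X = M"
  proof (rule Zorn_Lemma2, intro ballI)
    fix C assume C: "C \<in> chains Z"
    show "\<exists>U\<in>Z. \<forall>X\<in>C. X \<subseteq> U"
    proof (cases "C = {}")
      case False
      have "subset.chain {H. fip H} C"
        using C by (auto simp: chains_alt_def Z_def subset.chain_def)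
      then have "fip (\<Union>C)" using fip_Union_chain[OF False] by blast
      moreover have "G \<subseteq> \<Union>C" using False C by (auto simp: Z_def chains_def)
      ultimately show ?thesis by (auto simp: Z_def)
    qed (use assms in \<open>auto simp: Z_def\<close>)
  qed
  then obtain M where "M \<in> Z" "\<And>X. X \<in> Z \<Longrightarrow> M \<subseteq> X \<Longrightarrow> X = M" by blast
  then have "ultrafilter_nat M" "G \<subseteq> M"
    by (auto simp: Z_def intro!: maximal_fip_ultrafilter)
  then show ?thesis by blast
qed

lemma compact_space_beta_omega_top: "compact_space beta_omega_top"
  unfolding compact_space_fip
proof (intro allI impI)
  fix \<U> assume h: "(\<forall>C\<in>\<U>. closedin beta_omega_top C) \<and> (\<forall>\<F>. finite \<F> \<and> \<F> \<subseteq> \<U> \<longrightarrow> \<Inter>\<F> \<noteq> {})"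
  define G where "G = {B. \<exists>C\<in>\<U>. C \<subseteq> clopen_of B}"
  have "fip G"
    unfolding fip_def
  proof (intro allI impI)
    fix F assume F: "finite F \<and> F \<subseteq> G"
    then have "\<forall>B\<in>F. \<exists>C. C \<in> \<U> \<and> C \<subseteq> clopen_of B" unfolding G_def by blast
    then obtain c where c: "\<And>B. B \<in> F \<Longrightarrow> c B \<in> \<U> \<and> c B \<subseteq> clopen_of B" by metis
    have "finite (c ` F)" "c ` F \<subseteq> \<U>" using F c by auto
    then have "\<Inter>(c ` F) \<noteq> {}" using h by blast
    then obtain U where U: "U \<in> \<Inter>(c ` F)" by blast
    show "\<Inter>F \<noteq> {}"
    proof (cases "F = {}")
      case False
      then obtain B0 where "B0 \<in> F" by blast
      then have "U \<in> clopen_of B0" using U c by blast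
      then have u: "ultrafilter_nat U" by (simp add: clopen_of_def beta_omega_def)
      have "F \<subseteq> U" using U c by (auto simp: clopen_of_def)
      then have "\<Inter>F \<in> U" using uf_Inter_finite[OF u] F by blast
      then show ?thesis using uf_empty[OF u] by auto
    qed simp
  qed
  then obtain V where V: "ultrafilter_nat V" "G \<subseteq> V" using ultrafilter_lemma by blast
  have "V \<in> C" if C: "C \<in> \<U>" for C
  proof (rule ccontr)
    assume "V \<notin> C"
    have "C \<subseteq> beta_omega" "openin beta_omega_top (beta_omega - C)"
      using h C closedin_subset[of beta_omega_top C]
      by (auto simp: closedin_def topspace_beta_omega_top)
    moreover have "V \<in> beta_omega - C" using V \<open>V \<notin> C\<close> by (simp add: beta_omega_def)
    ultimately obtain A where A: "V \<in> clopen_of A" "C \<subseteq> clopen_of (- A)"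
      unfolding openin_beta_omega_top_iff clopen_of_Compl by blast
    then have "- A \<in> V" using V C unfolding G_def by blast
    then show False using A uf_Compl_iff[OF V(1)] by (simp add: clopen_of_def)
  qed
  then show "\<Inter>\<U> \<noteq> {}" by blast
qed

lemma Hausdorff_space_beta_omega_top: "Hausdorff_space beta_omega_top"
  unfolding Hausdorff_space_def
proof (intro allI impI)
  fix x y assume h: "x \<in> topspace beta_omega_top \<and> y \<in> topspace beta_omega_top \<and> x \<noteq> y"
  then have ux: "ultrafilter_nat x" and uy: "ultrafilter_nat y"
    by (auto simp: topspace_beta_omega_top beta_omega_def)
  have "\<exists>A. A \<in> x \<and> A \<notin> y"
  proof (rule ccontr)
    assume "\<nexists>A. A \<in> x \<and> A \<notin> y"
    then have "x \<subseteq> y" by blast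
    moreover have "y \<subseteq> x" using \<open>x \<subseteq> y\<close> uf_Compl_iff[OF ux] uf_Compl_iff[OF uy] by blast
    ultimately show False using h by blast
  qed
  then obtain A where "x \<in> clopen_of A" "y \<in> clopen_of (- A)"
    using h uf_Compl_iff[OF uy] by (auto simp: clopen_of_def topspace_beta_omega_top)
  moreover have "disjnt (clopen_of A) (clopen_of (- A))" by (auto simp: clopen_of_Compl disjnt_def)
  ultimately show "\<exists>U V. openin beta_omega_top U \<and> openin beta_omega_top V \<and> x \<in> U \<and> y \<in> V \<and> disjnt U V"
    using openin_clopen_of by blast
qed

lemma compactin_iff_closedin_beta_omega_top:
  "compactin beta_omega_top K \<longleftrightarrow> closedin beta_omega_top K"
  by (meson closedin_compact_space compact_space_beta_omega_top compactin_imp_closedin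
      Hausdorff_space_beta_omega_top)

lemma compactin_clopen_of_cover:
  assumes K: "compactin beta_omega_top K" and cover: "K \<subseteq> \<Union>(clopen_of ` \<C>)"
  obtains \<C>0 where "finite \<C>0" "\<C>0 \<subseteq> \<C>" "K \<subseteq> clopen_of (\<Union>\<C>0)"
proof -
  have "\<forall>U\<in>clopen_of ` \<C>. openin beta_omega_top U" using openin_clopen_of by blast
  then obtain \<F> where "finite \<F>" "\<F> \<subseteq> clopen_of ` \<C>" "K \<subseteq> \<Union>\<F>"
    using K cover unfolding compactin_def by meson
  moreover obtain \<C>0 where "\<C>0 \<subseteq> \<C>" "finite \<C>0" "\<F> = clopen_of ` \<C>0"
    using \<open>finite \<F>\<close> \<open>\<F> \<subseteq> clopen_of ` \<C>\<close> by (meson finite_subset_image)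
  ultimately show ?thesis using that by (simp add: clopen_of_Union)
qed

lemma compactin_clopen_between:
  assumes K: "compactin beta_omega_top K" and W: "openin beta_omega_top W" and "K \<subseteq> W"
  shows "\<exists>A. K \<subseteq> clopen_of A \<and> clopen_of A \<subseteq> W"
proof -
  have "K \<subseteq> \<Union>(clopen_of ` {A. clopen_of A \<subseteq> W})"
    using assms(3) W unfolding openin_beta_omega_top_iff by blast
  then obtain \<C>0 where "finite \<C>0" "\<C>0 \<subseteq> {A. clopen_of A \<subseteq> W}" "K \<subseteq> clopen_of (\<Union>\<C>0)"
    using compactin_clopen_of_cover[OF K] by blast
  then show ?thesis by (intro exI[of _ "\<Union>\<C>0"]) (auto simp: clopen_of_Union)
qed

lemma clopen_of_subset_UN_openin:
  assumes W: "\<And>i. openin beta_omega_top (W i)" and A: "clopen_of A \<subseteq> (\<Union>i. W i)"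
  obtains I B where "finite I" "\<And>i. clopen_of (B i) \<subseteq> W i" "A \<subseteq> (\<Union>i\<in>I. B i)"
proof -
  define \<C> where "\<C> = {C. \<exists>i. clopen_of C \<subseteq> W i}"
  have "clopen_of A \<subseteq> \<Union>(clopen_of ` \<C>)"
  proof
    fix U assume "U \<in> clopen_of A"
    then obtain i where "U \<in> W i" using A by blast
    then obtain C where "U \<in> clopen_of C" "clopen_of C \<subseteq> W i"
      using W[of i] unfolding openin_beta_omega_top_iff by blast
    then show "U \<in> \<Union>(clopen_of ` \<C>)" unfolding \<C>_def by blast
  qed
  moreover have "compactin beta_omega_top (clopen_of A)"
    using closedin_clopen_of compactin_iff_closedin_beta_omega_top by blast
  ultimately obtain \<C>0 where C0: "finite \<C>0" "\<C>0 \<subseteq> \<C>" "clopen_of A \<subseteq> clopen_of (\<Union>\<C>0)"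
    using compactin_clopen_of_cover by blast
  have "\<forall>C\<in>\<C>0. \<exists>i. clopen_of C \<subseteq> W i" using C0(2) unfolding \<C>_def by blast
  then obtain idx where idx: "\<forall>C\<in>\<C>0. clopen_of C \<subseteq> W (idx C)" by (rule bchoice[THEN exE])
  define B where "B i = \<Union>{C \<in> \<C>0. idx C = i}" for i
  have "clopen_of (B i) \<subseteq> W i" for i
    using C0(1) idx by (auto simp: B_def clopen_of_Union)
  moreover have "A \<subseteq> (\<Union>i\<in>idx ` \<C>0. B i)"
    using C0(3) unfolding clopen_of_subset_iff B_def by blast
  ultimately show ?thesis using that C0(1) by blast
qed

lemma separable_space_subtopology_dense:
  assumes "separable_space (subtopology X F)" "F \<subseteq> topspace X"
  obtains C where "countable C" "C \<subseteq> F" "F \<subseteq> X closure_of C"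
proof -
  obtain C where C: "countable C" "C \<subseteq> F" "subtopology X F closure_of C = F"
    using assms unfolding separable_space_def by (auto simp: Int_absorb1)
  have "F \<subseteq> X closure_of C" using C(3) closure_of_subtopology_subset[of X F C] by simp
  then show ?thesis by (rule that[OF C(1,2)])
qed

section \<open>Boolean homomorphisms into a measure algebra\<close>

lemma (in finite_measure) countable_Inter_measure_minimal:
  assumes Y: "\<Y> \<subseteq> sets M" "\<Y> \<noteq> {}"
  obtains \<Y>0 where "countable \<Y>0" "\<Y>0 \<subseteq> \<Y>" "\<Y>0 \<noteq> {}"
    "\<And>\<Z>. countable \<Z> \<Longrightarrow> \<Z> \<subseteq> \<Y> \<Longrightarrow> \<Z> \<noteq> {} \<Longrightarrow> measure M (\<Inter>\<Y>0) \<le> measure M (\<Inter>\<Z>)"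
proof -
  define fam where "fam = {\<Z>. countable \<Z> \<and> \<Z> \<subseteq> \<Y> \<and> \<Z> \<noteq> {}}"
  define V where "V = (\<lambda>\<Z>. measure M (\<Inter>\<Z>)) ` fam"
  obtain Y0 where "Y0 \<in> \<Y>" using Y by blast
  then have Vne: "V \<noteq> {}" by (auto simp: V_def fam_def intro!: exI[of _ "{Y0}"])
  have Vbdd: "bdd_below V" by (auto simp: V_def intro!: bdd_belowI[of _ 0])
  define m where "m = Inf V"
  have "\<forall>k::nat. \<exists>\<Z>\<in>fam. measure M (\<Inter>\<Z>) < m + 1 / Suc k"
  proof
    fix k :: nat
    have "Inf V < m + 1 / Suc k" by (simp add: m_def)
    then show "\<exists>\<Z>\<in>fam. measure M (\<Inter>\<Z>) < m + 1 / Suc k"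
      using cInf_less_iff[OF Vne Vbdd] by (auto simp: V_def)
  qed
  then obtain Z where Z: "\<And>k. Z k \<in> fam" "\<And>k. measure M (\<Inter>(Z k)) < m + 1 / Suc k" by metis
  define \<Y>0 where "\<Y>0 = (\<Union>k. Z k)"
  have Y0fam: "\<Y>0 \<in> fam" using Z(1) unfolding fam_def \<Y>0_def by (auto intro: countable_UN)
  have le: "measure M (\<Inter>\<Y>0) \<le> m"
  proof (rule field_le_epsilon)
    fix e :: real assume "0 < e"
    then obtain k :: nat where k: "1 / Suc k < e" by (metis nat_approx_posE)
    have "(\<Inter>x\<in>Z k. x) \<in> sets M"
      using Z(1)[of k] Y unfolding fam_def by (intro sets.countable_INT') auto
    moreover have "\<Inter>\<Y>0 \<subseteq> \<Inter>(Z k)" unfolding \<Y>0_def by blast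
    ultimately have "measure M (\<Inter>\<Y>0) \<le> measure M (\<Inter>(Z k))"
      by (intro finite_measure_mono) auto
    then show "measure M (\<Inter>\<Y>0) \<le> m + e" using Z(2)[of k] k by linarith
  qed
  have lower: "m \<le> measure M (\<Inter>\<Z>)" if "countable \<Z>" "\<Z> \<subseteq> \<Y>" "\<Z> \<noteq> {}" for \<Z>
    unfolding m_def using that by (intro cInf_lower[OF _ Vbdd]) (auto simp: V_def fam_def)
  show ?thesis
  proof (rule that)
    show "countable \<Y>0" "\<Y>0 \<subseteq> \<Y>" "\<Y>0 \<noteq> {}" using Y0fam by (auto simp: fam_def)
    show "measure M (\<Inter>\<Y>0) \<le> measure M (\<Inter>\<Z>)" if "countable \<Z>" "\<Z> \<subseteq> \<Y>" "\<Z> \<noteq> {}" for \<Z>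
      using le lower[OF that] by linarith
  qed
qed

lemma (in finite_measure) countable_essential_infimum:
  assumes Y: "\<Y> \<subseteq> sets M" "\<Y> \<noteq> {}"
  obtains \<Y>0 where "countable \<Y>0" "\<Y>0 \<subseteq> \<Y>" "\<Y>0 \<noteq> {}"
    "\<And>Y. Y \<in> \<Y> \<Longrightarrow> AE x in M. x \<in> \<Inter>\<Y>0 \<longrightarrow> x \<in> Y"
proof -
  obtain \<Y>0 where Y0: "countable \<Y>0" "\<Y>0 \<subseteq> \<Y>" "\<Y>0 \<noteq> {}"
    and min: "\<And>\<Z>. countable \<Z> \<Longrightarrow> \<Z> \<subseteq> \<Y> \<Longrightarrow> \<Z> \<noteq> {} \<Longrightarrow> measure M (\<Inter>\<Y>0) \<le> measure M (\<Inter>\<Z>)"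
    using countable_Inter_measure_minimal[OF Y] by blast
  have "(\<Inter>x\<in>\<Y>0. x) \<in> sets M" using Y0 Y by (intro sets.countable_INT') auto
  then have Y0_sets: "\<Inter>\<Y>0 \<in> sets M" by simp
  have "AE x in M. x \<in> \<Inter>\<Y>0 \<longrightarrow> x \<in> Y" if YY: "Y \<in> \<Y>" for Y
  proof -
    have Ysets: "Y \<in> sets M" using YY Y by blast
    have "measure M (\<Inter>\<Y>0) \<le> measure M (\<Inter>\<Y>0 \<inter> Y)"
      using min[of "insert Y \<Y>0"] Y0 YY by (simp add: Int_commute)
    moreover have "measure M (\<Inter>\<Y>0 - Y) = measure M (\<Inter>\<Y>0) - measure M (\<Inter>\<Y>0 \<inter> Y)"
      using Y0_sets Ysets by (rule finite_measure_Diff')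
    ultimately have "measure M (\<Inter>\<Y>0 - Y) = 0"
      using measure_nonneg[of M "\<Inter>\<Y>0 - Y"] finite_measure_mono[of "\<Inter>\<Y>0 \<inter> Y" "\<Inter>\<Y>0"] Y0_sets
      by linarith
    then have "\<Inter>\<Y>0 - Y \<in> null_sets M"
      using Y0_sets Ysets by (simp add: emeasure_eq_measure null_sets_def)
    then have "AE x in M. x \<notin> \<Inter>\<Y>0 - Y" by (rule AE_not_in)
    then show ?thesis by eventually_elim auto
  qed
  then show ?thesis using that Y0 by blast
qed

text \<open>A Sikorski-type extension theorem: a monotone, finitely subadditive map \<open>U\<close> from a power
  set into a sub-\<open>\<sigma>\<close>-algebra of a probability space dominates a Boolean homomorphism into the
  measure algebra, i.e.\ a map that is a homomorphism modulo null sets.\<close>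
locale dominated_hom_setup = prob_space M for M :: "'a measure" +
  fixes SS :: "'a set set" and U :: "'b set \<Rightarrow> 'a set"
  assumes SS_sigma: "sigma_algebra (space M) SS" and SS_sets: "SS \<subseteq> sets M"
    and U_SS: "U A \<in> SS" and U_mono: "A \<subseteq> B \<Longrightarrow> U A \<subseteq> U B"
    and U_Un: "U (A \<union> B) \<subseteq> U A \<union> U B" and U_empty: "U {} = {}"
    and U_UNIV: "U UNIV = space M"
begin

interpretation SS: sigma_algebra "space M" SS by (rule SS_sigma)

text \<open>Partial homomorphisms are relations rather than functions, since their values are only
  determined up to null sets.\<close>
definition partial_hom :: "('b set \<times> 'a set) set \<Rightarrow> bool" where
  "partial_hom R \<longleftrightarrow>
     (\<forall>A S. (A,S) \<in> R \<longrightarrow> S \<in> SS \<and> (AE x in M. x \<in> S \<longrightarrow> x \<in> U A)) \<and>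
     (\<forall>A S S'. (A,S) \<in> R \<longrightarrow> (A,S') \<in> R \<longrightarrow> (AE x in M. x \<in> S \<longleftrightarrow> x \<in> S')) \<and>
     (\<forall>A S. (A,S) \<in> R \<longrightarrow> (\<exists>S'. (- A,S') \<in> R \<and> (AE x in M. x \<in> S' \<longleftrightarrow> x \<notin> S))) \<and>
     (\<forall>A S B T. (A,S) \<in> R \<longrightarrow> (B,T) \<in> R \<longrightarrow>
         (\<exists>Q. (A \<inter> B, Q) \<in> R \<and> (AE x in M. x \<in> Q \<longleftrightarrow> x \<in> S \<and> x \<in> T))) \<and>
     (\<exists>S. (UNIV, S) \<in> R)"

lemma partial_hom_trivial: "partial_hom {(UNIV, space M), ({}, {})}"
  unfolding partial_hom_def using SS.top SS.empty_sets by (auto simp: U_UNIV)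

lemma partial_hom_Union_chain:
  assumes C: "C \<in> chains {R. partial_hom R}" and ne: "C \<noteq> {}"
  shows "partial_hom (\<Union>C)"
proof -
  have hom: "\<And>R. R \<in> C \<Longrightarrow> partial_hom R" using C chainsD2 by blast
  have two: "\<exists>R\<in>C. p \<in> R \<and> q \<in> R" if pq: "p \<in> \<Union>C" "q \<in> \<Union>C" for p q
  proof -
    obtain R1 R2 where "R1 \<in> C" "R2 \<in> C" "p \<in> R1" "q \<in> R2" using pq by blast
    then show ?thesis using C unfolding chains_def chain_subset_def by blast
  qed
  show ?thesis
    unfolding partial_hom_def
  proof (intro conjI allI impI)
    fix A S assume "(A, S) \<in> \<Union>C"
    then obtain R where "R \<in> C" "(A,S) \<in> R" by blast
    then show "S \<in> SS" "AE x in M. x \<in> S \<longrightarrow> x \<in> U A"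
      using hom unfolding partial_hom_def by blast+
  next
    fix A S S' assume "(A, S) \<in> \<Union>C" "(A, S') \<in> \<Union>C"
    then obtain R where "R \<in> C" "(A,S) \<in> R" "(A,S') \<in> R" using two by blast
    then show "AE x in M. x \<in> S \<longleftrightarrow> x \<in> S'" using hom unfolding partial_hom_def by blast
  next
    fix A S assume "(A, S) \<in> \<Union>C"
    then obtain R where R: "R \<in> C" "(A,S) \<in> R" by blast
    then obtain S' where "(- A, S') \<in> R" "AE x in M. x \<in> S' \<longleftrightarrow> x \<notin> S"
      using hom[OF R(1)] unfolding partial_hom_def by blast
    then show "\<exists>S'. (- A, S') \<in> \<Union>C \<and> (AE x in M. x \<in> S' \<longleftrightarrow> x \<notin> S)" using R by blast
  next
    fix A S B T assume "(A, S) \<in> \<Union>C" "(B, T) \<in> \<Union>C"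
    then obtain R where R: "R \<in> C" "(A,S) \<in> R" "(B,T) \<in> R" using two by blast
    then obtain Q where "(A \<inter> B, Q) \<in> R" "AE x in M. x \<in> Q \<longleftrightarrow> x \<in> S \<and> x \<in> T"
      using hom[OF R(1)] unfolding partial_hom_def by blast
    then show "\<exists>Q. (A \<inter> B, Q) \<in> \<Union>C \<and> (AE x in M. x \<in> Q \<longleftrightarrow> x \<in> S \<and> x \<in> T)" using R by blast
  next
    obtain R where "R \<in> C" using ne by blast
    then show "\<exists>S. (UNIV, S) \<in> \<Union>C" using hom unfolding partial_hom_def by blast
  qed
qed

context
  fixes R :: "('b set \<times> 'a set) set"
  assumes R: "partial_hom R"
begin

lemma partial_hom_SS: "(A,S) \<in> R \<Longrightarrow> S \<in> SS"
  using R unfolding partial_hom_def by blast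

lemma partial_hom_dominated: "(A,S) \<in> R \<Longrightarrow> AE x in M. x \<in> S \<longrightarrow> x \<in> U A"
  using R unfolding partial_hom_def by blast

lemma partial_hom_unique: "(A,S) \<in> R \<Longrightarrow> (A,S') \<in> R \<Longrightarrow> AE x in M. x \<in> S \<longleftrightarrow> x \<in> S'"
  using R unfolding partial_hom_def by blast

lemma partial_hom_Compl:
  "(A,S) \<in> R \<Longrightarrow> \<exists>S'. (- A,S') \<in> R \<and> (AE x in M. x \<in> S' \<longleftrightarrow> x \<notin> S)"
  using R unfolding partial_hom_def by blast

lemma partial_hom_Int:
  "(A,S) \<in> R \<Longrightarrow> (B,T) \<in> R \<Longrightarrow> \<exists>Q. (A \<inter> B, Q) \<in> R \<and> (AE x in M. x \<in> Q \<longleftrightarrow> x \<in> S \<and> x \<in> T)"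
  using R unfolding partial_hom_def by blast

lemma partial_hom_UNIV: "\<exists>S. (UNIV, S) \<in> R"
  using R unfolding partial_hom_def by blast

lemma partial_hom_empty: "\<exists>S. ({}, S) \<in> R"
  using partial_hom_UNIV partial_hom_Compl by fastforce

text \<open>The value \<open>b\<close> for a new set \<open>A0\<close> must satisfy \<open>h(C) \<inter> b \<subseteq> U(C \<inter> A0)\<close> and
  \<open>h(C) - U(C - A0) \<subseteq> b\<close>; the essential infimum of the upper bounds does both.\<close>
lemma partial_hom_separator:
  obtains b where "b \<in> SS"
    and "\<And>C S. (C,S) \<in> R \<Longrightarrow> AE x in M. x \<in> b \<and> x \<in> S \<longrightarrow> x \<in> U (C \<inter> A0)"
    and "\<And>C S. (C,S) \<in> R \<Longrightarrow> AE x in M. x \<in> S \<and> x \<notin> U (C - A0) \<longrightarrow> x \<in> b"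
proof -
  define \<Y> where "\<Y> = {(space M - S) \<union> U (C \<inter> A0) | C S. (C,S) \<in> R}"
  have YSS: "\<Y> \<subseteq> SS" unfolding \<Y>_def using partial_hom_SS U_SS by auto
  have "\<Y> \<noteq> {}" using partial_hom_UNIV unfolding \<Y>_def by blast
  then obtain \<Y>0 where Y0: "countable \<Y>0" "\<Y>0 \<subseteq> \<Y>" "\<Y>0 \<noteq> {}"
    and Y0ae: "\<And>Y. Y \<in> \<Y> \<Longrightarrow> AE x in M. x \<in> \<Inter>\<Y>0 \<longrightarrow> x \<in> Y"
    using countable_essential_infimum[of \<Y>] YSS SS_sets by blast
  have "(\<Inter>x\<in>\<Y>0. x) \<in> SS" using Y0 YSS by (intro SS.countable_INT') auto
  then have bSS: "\<Inter>\<Y>0 \<in> SS" by simp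
  have below: "AE x in M. x \<in> \<Inter>\<Y>0 \<and> x \<in> S \<longrightarrow> x \<in> U (C \<inter> A0)" if "(C,S) \<in> R" for C S
  proof -
    have "(space M - S) \<union> U (C \<inter> A0) \<in> \<Y>" using that unfolding \<Y>_def by blast
    from Y0ae[OF this] show ?thesis by eventually_elim auto
  qed
  have above: "AE x in M. x \<in> S \<and> x \<notin> U (C - A0) \<longrightarrow> x \<in> \<Inter>\<Y>0" if CS: "(C,S) \<in> R" for C S
  proof -
    have "AE x in M. x \<in> S \<and> x \<notin> U (C - A0) \<longrightarrow> x \<in> Y" if "Y \<in> \<Y>0" for Y
    proof -
      obtain C' S' where Y: "Y = (space M - S') \<union> U (C' \<inter> A0)" and C'S': "(C',S') \<in> R"
        using \<open>Y \<in> \<Y>0\<close> Y0(2) unfolding \<Y>_def by blast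
      obtain Q where Q: "(C \<inter> C', Q) \<in> R" "AE x in M. x \<in> Q \<longleftrightarrow> x \<in> S \<and> x \<in> S'"
        using partial_hom_Int[OF CS C'S'] by blast
      have "C \<inter> C' \<subseteq> (C - A0) \<union> (C' \<inter> A0)" by blast
      then have sub: "U (C \<inter> C') \<subseteq> U (C - A0) \<union> U (C' \<inter> A0)" using U_mono U_Un by blast
      show ?thesis using Q(2) partial_hom_dominated[OF Q(1)] AE_space
      proof eventually_elim
        case (elim x)
        then show ?case using sub Y by auto
      qed
    qed
    then have "AE x in M. \<forall>Y\<in>\<Y>0. x \<in> S \<and> x \<notin> U (C - A0) \<longrightarrow> x \<in> Y"
      by (rule AE_ball_countable[OF Y0(1), THEN iffD2, rule_format])
    then show ?thesis by eventually_elim blast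
  qed
  show ?thesis using bSS below above by (rule that)
qed

end

context
  fixes R :: "('b set \<times> 'a set) set" and A0 :: "'b set" and b :: "'a set"
  assumes R: "partial_hom R" and b: "b \<in> SS"
    and b_below: "\<And>C S. (C,S) \<in> R \<Longrightarrow> AE x in M. x \<in> b \<and> x \<in> S \<longrightarrow> x \<in> U (C \<inter> A0)"
    and b_above: "\<And>C S. (C,S) \<in> R \<Longrightarrow> AE x in M. x \<in> S \<and> x \<notin> U (C - A0) \<longrightarrow> x \<in> b"
begin

lemma separator_agree_inside:
  assumes CS: "(C,S) \<in> R" and CS': "(C',S') \<in> R" and sub: "C \<inter> A0 \<subseteq> C'"
  shows "AE x in M. x \<in> b \<and> x \<in> S \<longrightarrow> x \<in> S'"
proof -
  obtain Sc where Sc: "(- C', Sc) \<in> R" "AE x in M. x \<in> Sc \<longleftrightarrow> x \<notin> S'"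
    using partial_hom_Compl[OF R CS'] by blast
  obtain Q where Q: "(C \<inter> - C', Q) \<in> R" "AE x in M. x \<in> Q \<longleftrightarrow> x \<in> S \<and> x \<in> Sc"
    using partial_hom_Int[OF R CS Sc(1)] by blast
  have "(C \<inter> - C') \<inter> A0 = {}" using sub by blast
  then have e: "U ((C \<inter> - C') \<inter> A0) = {}" by (simp only: U_empty)
  show ?thesis using b_below[OF Q(1)] Q(2) Sc(2) by eventually_elim (use e in auto)
qed

lemma separator_agree_outside:
  assumes DT: "(D,T) \<in> R" and DT': "(D',T') \<in> R" and sub: "D - A0 \<subseteq> D'"
  shows "AE x in M. x \<in> T \<and> x \<notin> b \<longrightarrow> x \<in> T'"
proof -
  obtain Tc where Tc: "(- D', Tc) \<in> R" "AE x in M. x \<in> Tc \<longleftrightarrow> x \<notin> T'"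
    using partial_hom_Compl[OF R DT'] by blast
  obtain Q where Q: "(D \<inter> - D', Q) \<in> R" "AE x in M. x \<in> Q \<longleftrightarrow> x \<in> T \<and> x \<in> Tc"
    using partial_hom_Int[OF R DT Tc(1)] by blast
  have "(D \<inter> - D') - A0 = {}" using sub by blast
  then have e: "U ((D \<inter> - D') - A0) = {}" by (simp only: U_empty)
  show ?thesis using b_above[OF Q(1)] Q(2) Tc(2) by eventually_elim (use e in auto)
qed

definition extension :: "('b set \<times> 'a set) set" where
  "extension = {((C \<inter> A0) \<union> (D - A0), (S \<inter> b) \<union> (T - b)) | C S D T. (C,S) \<in> R \<and> (D,T) \<in> R}"

lemma extensionE:
  assumes "(E,V) \<in> extension"
  obtains C S D T where "E = (C \<inter> A0) \<union> (D - A0)" "V = (S \<inter> b) \<union> (T - b)" "(C,S) \<in> R" "(D,T) \<in> R"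
  using assms unfolding extension_def by blast

lemma extensionI: "(C,S) \<in> R \<Longrightarrow> (D,T) \<in> R \<Longrightarrow> ((C \<inter> A0) \<union> (D - A0), (S \<inter> b) \<union> (T - b)) \<in> extension"
  unfolding extension_def by blast

lemma subset_extension: "R \<subseteq> extension"
proof
  fix p assume "p \<in> R"
  then obtain C S where p: "p = (C,S)" "(C,S) \<in> R" by (cases p) auto
  have "(C \<inter> A0) \<union> (C - A0) = C" "(S \<inter> b) \<union> (S - b) = S" by auto
  then show "p \<in> extension" using extensionI[OF p(2) p(2)] p(1) by simp
qed

lemma extension_defined: "\<exists>S. (A0, S) \<in> extension"
proof -
  obtain SU S0 where "(UNIV, SU) \<in> R" "({}, S0) \<in> R"
    using partial_hom_UNIV[OF R] partial_hom_empty[OF R] by blast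
  from extensionI[OF this] show ?thesis by auto
qed

lemma extension_Compl:
  assumes "(E,V) \<in> extension"
  shows "\<exists>V'. (- E, V') \<in> extension \<and> (AE x in M. x \<in> V' \<longleftrightarrow> x \<notin> V)"
proof -
  obtain C S D T where E: "E = (C \<inter> A0) \<union> (D - A0)" "V = (S \<inter> b) \<union> (T - b)"
    and CS: "(C,S) \<in> R" and DT: "(D,T) \<in> R" using assms by (rule extensionE)
  obtain Sc where Sc: "(- C, Sc) \<in> R" "AE x in M. x \<in> Sc \<longleftrightarrow> x \<notin> S"
    using partial_hom_Compl[OF R CS] by blast
  obtain Tc where Tc: "(- D, Tc) \<in> R" "AE x in M. x \<in> Tc \<longleftrightarrow> x \<notin> T"
    using partial_hom_Compl[OF R DT] by blast
  have "(- C \<inter> A0) \<union> (- D - A0) = - E" using E by auto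
  moreover have "AE x in M. x \<in> (Sc \<inter> b) \<union> (Tc - b) \<longleftrightarrow> x \<notin> V"
    using Sc(2) Tc(2) by eventually_elim (use E in auto)
  ultimately show ?thesis using extensionI[OF Sc(1) Tc(1)] by auto
qed

lemma extension_Int:
  assumes "(E,V) \<in> extension" "(E',V') \<in> extension"
  shows "\<exists>Q. (E \<inter> E', Q) \<in> extension \<and> (AE x in M. x \<in> Q \<longleftrightarrow> x \<in> V \<and> x \<in> V')"
proof -
  obtain C S D T where E: "E = (C \<inter> A0) \<union> (D - A0)" "V = (S \<inter> b) \<union> (T - b)"
    and CS: "(C,S) \<in> R" and DT: "(D,T) \<in> R" using assms(1) by (rule extensionE)
  obtain C' S' D' T' where E': "E' = (C' \<inter> A0) \<union> (D' - A0)" "V' = (S' \<inter> b) \<union> (T' - b)"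
    and CS': "(C',S') \<in> R" and DT': "(D',T') \<in> R" using assms(2) by (rule extensionE)
  obtain Q1 where Q1: "(C \<inter> C', Q1) \<in> R" "AE x in M. x \<in> Q1 \<longleftrightarrow> x \<in> S \<and> x \<in> S'"
    using partial_hom_Int[OF R CS CS'] by blast
  obtain Q2 where Q2: "(D \<inter> D', Q2) \<in> R" "AE x in M. x \<in> Q2 \<longleftrightarrow> x \<in> T \<and> x \<in> T'"
    using partial_hom_Int[OF R DT DT'] by blast
  have "((C \<inter> C') \<inter> A0) \<union> ((D \<inter> D') - A0) = E \<inter> E'" using E E' by auto
  moreover have "AE x in M. x \<in> (Q1 \<inter> b) \<union> (Q2 - b) \<longleftrightarrow> x \<in> V \<and> x \<in> V'"
    using Q1(2) Q2(2) by eventually_elim (use E E' in auto)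
  ultimately show ?thesis using extensionI[OF Q1(1) Q2(1)] by auto
qed

lemma partial_hom_extension: "partial_hom extension"
  unfolding partial_hom_def
proof (intro conjI allI impI)
  fix E V assume "(E, V) \<in> extension"
  then obtain C S D T where E: "E = (C \<inter> A0) \<union> (D - A0)" "V = (S \<inter> b) \<union> (T - b)"
    and CS: "(C,S) \<in> R" and DT: "(D,T) \<in> R" by (rule extensionE)
  show "V \<in> SS" using E partial_hom_SS[OF R CS] partial_hom_SS[OF R DT] b by auto
  have UE: "U (C \<inter> A0) \<subseteq> U E" "U (D - A0) \<subseteq> U E" using E U_mono by auto
  show "AE x in M. x \<in> V \<longrightarrow> x \<in> U E"
    using b_below[OF CS] b_above[OF DT] by eventually_elim (use E UE in auto)
next
  fix E V V' assume "(E, V) \<in> extension" "(E, V') \<in> extension"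
  then obtain C S D T C' S' D' T' where E: "E = (C \<inter> A0) \<union> (D - A0)" "V = (S \<inter> b) \<union> (T - b)"
    and CS: "(C,S) \<in> R" and DT: "(D,T) \<in> R"
    and E': "E = (C' \<inter> A0) \<union> (D' - A0)" "V' = (S' \<inter> b) \<union> (T' - b)"
    and CS': "(C',S') \<in> R" and DT': "(D',T') \<in> R" by (metis extensionE)
  have s: "C \<inter> A0 \<subseteq> C'" "C' \<inter> A0 \<subseteq> C" "D - A0 \<subseteq> D'" "D' - A0 \<subseteq> D"
    using E(1) E'(1) by blast+
  show "AE x in M. x \<in> V \<longleftrightarrow> x \<in> V'"
    using separator_agree_inside[OF CS CS' s(1)] separator_agree_inside[OF CS' CS s(2)]
      separator_agree_outside[OF DT DT' s(3)] separator_agree_outside[OF DT' DT s(4)]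
    by eventually_elim (use E E' in auto)
next
  show "\<exists>S. (UNIV, S) \<in> extension" using partial_hom_UNIV[OF R] subset_extension by blast
next
  fix E V assume "(E, V) \<in> extension"
  then show "\<exists>V'. (- E, V') \<in> extension \<and> (AE x in M. x \<in> V' \<longleftrightarrow> x \<notin> V)"
    by (rule extension_Compl)
next
  fix E V E' V' assume "(E, V) \<in> extension" "(E', V') \<in> extension"
  then show "\<exists>Q. (E \<inter> E', Q) \<in> extension \<and> (AE x in M. x \<in> Q \<longleftrightarrow> x \<in> V \<and> x \<in> V')"
    by (rule extension_Int)
qed

end

definition dominated_hom :: "('b set \<Rightarrow> 'a set) \<Rightarrow> bool" where
  "dominated_hom h \<longleftrightarrow> (\<forall>A B. h A \<in> SS \<and> (AE x in M. x \<in> h A \<longrightarrow> x \<in> U A) \<and>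
     (AE x in M. x \<in> h (- A) \<longleftrightarrow> x \<notin> h A) \<and>
     (AE x in M. x \<in> h (A \<inter> B) \<longleftrightarrow> x \<in> h A \<and> x \<in> h B))"

lemma sikorski_extension: "\<exists>h. dominated_hom h"
proof -
  have "\<exists>R\<in>{R. partial_hom R}. \<forall>X\<in>{R. partial_hom R}. R \<subseteq> X \<longrightarrow> X = R"
  proof (rule Zorn_Lemma2, intro ballI)
    fix C assume C: "C \<in> chains {R. partial_hom R}"
    show "\<exists>U\<in>{R. partial_hom R}. \<forall>X\<in>C. X \<subseteq> U"
      using partial_hom_trivial partial_hom_Union_chain[OF C] by (cases "C = {}") auto
  qed
  then obtain R where R: "partial_hom R" and max: "\<And>X. partial_hom X \<Longrightarrow> R \<subseteq> X \<Longrightarrow> X = R"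
    unfolding Bex_def Ball_def mem_Collect_eq by metis
  have "\<exists>S. (A, S) \<in> R" for A
  proof -
    obtain b where b: "b \<in> SS"
      and below: "\<And>C S. (C,S) \<in> R \<Longrightarrow> AE x in M. x \<in> b \<and> x \<in> S \<longrightarrow> x \<in> U (C \<inter> A)"
      and above: "\<And>C S. (C,S) \<in> R \<Longrightarrow> AE x in M. x \<in> S \<and> x \<notin> U (C - A) \<longrightarrow> x \<in> b"
      using partial_hom_separator[OF R, of A] by blast
    have "extension R A b = R"
      using max[OF partial_hom_extension[OF R b below above] subset_extension[OF R b below above]] .
    then show ?thesis using extension_defined[OF R b below above] by simp
  qed
  then obtain h where hR: "\<And>A. (A, h A) \<in> R" by metis
  have "h A \<in> SS \<and> (AE x in M. x \<in> h A \<longrightarrow> x \<in> U A) \<and>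
          (AE x in M. x \<in> h (- A) \<longleftrightarrow> x \<notin> h A) \<and>
          (AE x in M. x \<in> h (A \<inter> B) \<longleftrightarrow> x \<in> h A \<and> x \<in> h B)" for A B
  proof (intro conjI)
    show "h A \<in> SS" "AE x in M. x \<in> h A \<longrightarrow> x \<in> U A"
      using partial_hom_SS[OF R hR] partial_hom_dominated[OF R hR] by auto
    obtain S' where S': "(- A, S') \<in> R" "AE x in M. x \<in> S' \<longleftrightarrow> x \<notin> h A"
      using partial_hom_Compl[OF R hR] by blast
    show "AE x in M. x \<in> h (- A) \<longleftrightarrow> x \<notin> h A"
      using partial_hom_unique[OF R hR S'(1)] S'(2) by eventually_elim auto
    obtain Q where Q: "(A \<inter> B, Q) \<in> R" "AE x in M. x \<in> Q \<longleftrightarrow> x \<in> h A \<and> x \<in> h B"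
      using partial_hom_Int[OF R hR hR] by blast
    show "AE x in M. x \<in> h (A \<inter> B) \<longleftrightarrow> x \<in> h A \<and> x \<in> h B"
      using partial_hom_unique[OF R hR Q(1)] Q(2) by eventually_elim auto
  qed
  then show ?thesis unfolding dominated_hom_def by blast
qed

end

section \<open>Separability of \<open>L\<^sup>1\<close>\<close>

definition l1_approximable :: "'a measure \<Rightarrow> ('a \<Rightarrow> real) set \<Rightarrow> ('a \<Rightarrow> real) \<Rightarrow> bool" where
  "l1_approximable M D f \<longleftrightarrow> (\<forall>e>0. \<exists>h\<in>D. (\<integral>x. \<bar>f x - h x\<bar> \<partial>M) < e)"

lemma integral_abs_diff_triangle:
  fixes f g h :: "'a \<Rightarrow> real"
  assumes "integrable M f" "integrable M g" "integrable M h"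
  shows "(\<integral>x. \<bar>f x - h x\<bar> \<partial>M) \<le> (\<integral>x. \<bar>f x - g x\<bar> \<partial>M) + (\<integral>x. \<bar>g x - h x\<bar> \<partial>M)"
proof -
  have "(\<integral>x. \<bar>f x - h x\<bar> \<partial>M) \<le> (\<integral>x. \<bar>f x - g x\<bar> + \<bar>g x - h x\<bar> \<partial>M)"
    using assms by (intro integral_mono) auto
  also have "\<dots> = (\<integral>x. \<bar>f x - g x\<bar> \<partial>M) + (\<integral>x. \<bar>g x - h x\<bar> \<partial>M)"
    using assms by (intro Bochner_Integration.integral_add) auto
  finally show ?thesis .
qed

lemma l1_approximable_closed:
  assumes D: "\<And>h. h \<in> D \<Longrightarrow> integrable M h" and f: "integrable M f"
    and close: "\<And>e. 0 < e \<Longrightarrow> \<exists>g. integrable M g \<and> l1_approximable M D g \<and> (\<integral>x. \<bar>f x - g x\<bar> \<partial>M) < e"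
  shows "l1_approximable M D f"
  unfolding l1_approximable_def
proof (intro allI impI)
  fix e :: real assume e: "0 < e"
  then obtain g where g: "integrable M g" "l1_approximable M D g" "(\<integral>x. \<bar>f x - g x\<bar> \<partial>M) < e / 2"
    using close[of "e / 2"] by auto
  then obtain h where h: "h \<in> D" "(\<integral>x. \<bar>g x - h x\<bar> \<partial>M) < e / 2"
    using e unfolding l1_approximable_def by (meson half_gt_zero)
  have "(\<integral>x. \<bar>f x - h x\<bar> \<partial>M) \<le> (\<integral>x. \<bar>f x - g x\<bar> \<partial>M) + (\<integral>x. \<bar>g x - h x\<bar> \<partial>M)"
    using f g(1) D[OF h(1)] by (rule integral_abs_diff_triangle)
  then show "\<exists>h\<in>D. (\<integral>x. \<bar>f x - h x\<bar> \<partial>M) < e" using g(3) h by (intro bexI[of _ h]) auto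
qed

lemma l1_approximable_add:
  fixes f g :: "'a \<Rightarrow> real"
  assumes D: "\<And>h. h \<in> D \<Longrightarrow> integrable M h"
    and D_add: "\<And>h h'. h \<in> D \<Longrightarrow> h' \<in> D \<Longrightarrow> (\<lambda>x. h x + h' x) \<in> D"
    and f: "integrable M f" "l1_approximable M D f" and g: "integrable M g" "l1_approximable M D g"
  shows "l1_approximable M D (\<lambda>x. f x + g x)"
  unfolding l1_approximable_def
proof (intro allI impI)
  fix e :: real assume e: "0 < e"
  obtain h1 where h1: "h1 \<in> D" "(\<integral>x. \<bar>f x - h1 x\<bar> \<partial>M) < e / 2"
    using f(2) e unfolding l1_approximable_def by (meson half_gt_zero)
  obtain h2 where h2: "h2 \<in> D" "(\<integral>x. \<bar>g x - h2 x\<bar> \<partial>M) < e / 2"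
    using g(2) e unfolding l1_approximable_def by (meson half_gt_zero)
  have i1: "integrable M (\<lambda>x. \<bar>f x - h1 x\<bar>)" and i2: "integrable M (\<lambda>x. \<bar>g x - h2 x\<bar>)"
    using f(1) g(1) D[OF h1(1)] D[OF h2(1)] by auto
  have "(\<integral>x. \<bar>(f x + g x) - (h1 x + h2 x)\<bar> \<partial>M) \<le> (\<integral>x. \<bar>f x - h1 x\<bar> + \<bar>g x - h2 x\<bar> \<partial>M)"
    using f(1) g(1) D[OF h1(1)] D[OF h2(1)] i1 i2 by (intro integral_mono) auto
  also have "\<dots> = (\<integral>x. \<bar>f x - h1 x\<bar> \<partial>M) + (\<integral>x. \<bar>g x - h2 x\<bar> \<partial>M)"
    using i1 i2 by (rule Bochner_Integration.integral_add)
  finally show "\<exists>h\<in>D. (\<integral>x. \<bar>(f x + g x) - h x\<bar> \<partial>M) < e"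
    using h1 h2 D_add[OF h1(1) h2(1)] by (intro bexI[of _ "\<lambda>x. h1 x + h2 x"]) auto
qed

lemma l1_approximable_limit:
  fixes f :: "'a \<Rightarrow> real"
  assumes D: "\<And>h. h \<in> D \<Longrightarrow> integrable M h"
    and s: "\<And>i. integrable M (s i)" "\<And>i. l1_approximable M D (s i)"
    and lim: "\<And>x. x \<in> space M \<Longrightarrow> (\<lambda>i. s i x) \<longlonglongrightarrow> f x"
    and bound: "\<And>i x. x \<in> space M \<Longrightarrow> norm (s i x) \<le> 2 * norm (f x)"
    and f: "integrable M f"
  shows "l1_approximable M D f"
proof (rule l1_approximable_closed[OF D f])
  have "(\<lambda>i. \<integral>x. \<bar>f x - s i x\<bar> \<partial>M) \<longlonglongrightarrow> (\<integral>x. 0 \<partial>M)"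
  proof (rule integral_dominated_convergence[where w = "\<lambda>x. 3 * \<bar>f x\<bar>"])
    show "AE x in M. (\<lambda>i. \<bar>f x - s i x\<bar>) \<longlonglongrightarrow> 0"
      using lim by (intro AE_I2) (metis tendsto_diff[OF tendsto_const] tendsto_rabs_zero diff_self)
    show "AE x in M. norm \<bar>f x - s i x\<bar> \<le> 3 * \<bar>f x\<bar>" for i
      using bound[of _ i] by (intro AE_I2) fastforce
  qed (use s(1) f in auto)
  then have "(\<lambda>i. \<integral>x. \<bar>f x - s i x\<bar> \<partial>M) \<longlonglongrightarrow> 0" by simp
  fix e :: real assume "0 < e"
  then obtain N where "norm ((\<integral>x. \<bar>f x - s N x\<bar> \<partial>M) - 0) < e"
    using LIMSEQ_D[OF \<open>(\<lambda>i. _) \<longlonglongrightarrow> 0\<close>] by blast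
  then show "\<exists>g. integrable M g \<and> l1_approximable M D g \<and> (\<integral>x. \<bar>f x - g x\<bar> \<partial>M) < e"
    using s by (intro exI[of _ "s N"]) auto
qed

lemma countable_typeI:
  assumes D: "countable D" "\<And>h. h \<in> D \<Longrightarrow> integrable M h"
    and D_add: "\<And>h h'. h \<in> D \<Longrightarrow> h' \<in> D \<Longrightarrow> (\<lambda>x. h x + h' x) \<in> D"
    and indicator: "\<And>A c. A \<in> sets M \<Longrightarrow> emeasure M A < \<infinity> \<Longrightarrow>
      l1_approximable M D (\<lambda>x. indicator A x *\<^sub>R c)"
  shows "countable_type M"
proof -
  have "l1_approximable M D f" if "integrable M f" for f :: "'a \<Rightarrow> real"
    using that
  proof (induction rule: integrable_induct)
    case (base A c)
    then show ?case by (rule indicator)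
  next
    case (add f g)
    then show ?case using l1_approximable_add[OF D(2) D_add] by blast
  next
    case (lim f s)
    then show ?case using l1_approximable_limit[OF D(2)] by blast
  qed
  then show ?thesis unfolding countable_type_def l1_approximable_def using D by blast
qed

section \<open>A finitely additive measure on the subsets of omega\<close>

definition unit_ivl :: "real set" where
  "unit_ivl = {0..<1}"

definition lebesgue_unit :: "real measure" where
  "lebesgue_unit = restrict_space lborel unit_ivl"

definition dyadic_index :: "nat \<Rightarrow> real \<Rightarrow> nat" where
  "dyadic_index k y = nat \<lfloor>2^k * y\<rfloor>"

definition dyadic_union :: "nat \<Rightarrow> nat set \<Rightarrow> real set" where
  "dyadic_union k J = {y \<in> unit_ivl. dyadic_index k y \<in> J}"

text \<open>Every natural number \<open>n\<close> codes a dyadic interval \<open>[j/2^k, (j+1)/2^k)\<close> of \<open>[0,1)\<close>, where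
  \<open>(k, j) = prod_decode n\<close>; the interval is empty when \<open>j \<ge> 2^k\<close>.\<close>
definition dyadic_level :: "nat \<Rightarrow> nat" where
  "dyadic_level n = fst (prod_decode n)"

definition dyadic_offset :: "nat \<Rightarrow> nat" where
  "dyadic_offset n = snd (prod_decode n)"

definition dyadic_interval :: "nat \<Rightarrow> real set" where
  "dyadic_interval n = dyadic_union (dyadic_level n) {dyadic_offset n}"

definition limsup_intervals :: "nat set \<Rightarrow> real set" where
  "limsup_intervals A = {y \<in> unit_ivl. infinite {n \<in> A. y \<in> dyadic_interval n}}"

definition dyadic_sigma :: "real set set" where
  "dyadic_sigma = sigma_sets unit_ivl (range dyadic_interval)"

lemma space_lebesgue_unit: "space lebesgue_unit = unit_ivl"
  by (simp add: lebesgue_unit_def space_restrict_space)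

lemma unit_ivl_sets: "unit_ivl \<in> sets borel"
  unfolding unit_ivl_def by (rule atLeastLessThan_borel)

lemma Ico_fmeasurable: "a \<le> b \<Longrightarrow> {a..<(b::real)} \<in> fmeasurable lborel"
  by (simp add: fmeasurable_def atLeastLessThan_borel)

lemma unit_ivl_Ico_sets: "unit_ivl \<inter> {a..<(b::real)} \<in> sets borel"
  using unit_ivl_sets atLeastLessThan_borel by (rule sets.Int)

lemma sets_lebesgue_unit_iff: "S \<in> sets lebesgue_unit \<longleftrightarrow> S \<subseteq> unit_ivl \<and> S \<in> sets lborel"
  unfolding lebesgue_unit_def by (rule sets_restrict_space_iff) (simp add: unit_ivl_sets)

lemma measure_lebesgue_unit: "S \<subseteq> unit_ivl \<Longrightarrow> measure lebesgue_unit S = measure lborel S"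
  unfolding lebesgue_unit_def by (rule measure_restrict_space) (simp_all add: unit_ivl_sets)

lemma prob_space_lebesgue_unit: "prob_space lebesgue_unit"
proof (rule prob_spaceI)
  have "emeasure lebesgue_unit unit_ivl = emeasure lborel unit_ivl"
    unfolding lebesgue_unit_def by (rule emeasure_restrict_space) (simp_all add: unit_ivl_sets)
  then show "emeasure lebesgue_unit (space lebesgue_unit) = 1"
    by (simp add: space_lebesgue_unit unit_ivl_def)
qed

interpretation LU: prob_space lebesgue_unit by (rule prob_space_lebesgue_unit)

lemma dyadic_index_div:
  assumes "0 \<le> y"
  shows "dyadic_index k y = dyadic_index (k + d) y div 2^d"
proof -
  have "\<lfloor>(2^(k+d)*y) / real_of_int (2^d)\<rfloor> = \<lfloor>2^(k+d)*y\<rfloor> div 2^d"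
    by (rule floor_divide_real_eq_div) simp
  moreover have "(2^(k+d)*y) / real_of_int (2^d) = 2^k*y" by (simp add: power_add)
  ultimately have e: "\<lfloor>2^k*y\<rfloor> = \<lfloor>2^(k+d)*y\<rfloor> div 2^d" by simp
  have "0 \<le> \<lfloor>2^(k+d)*y\<rfloor>" using assms by simp
  then show ?thesis unfolding dyadic_index_def e by (simp add: nat_div_distrib nat_power_eq)
qed

lemma dyadic_index_div_le:
  assumes "0 \<le> y" "k \<le> k'"
  shows "dyadic_index k y = dyadic_index k' y div 2^(k' - k)"
  using dyadic_index_div[OF assms(1), of k "k' - k"] assms(2) by simp

lemma dyadic_index_less: "y \<in> unit_ivl \<Longrightarrow> dyadic_index k y < 2^k"
proof -
  assume y: "y \<in> unit_ivl"
  then have "2^k * y < 2^k" by (simp add: unit_ivl_def)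
  then have "\<lfloor>2^k * y\<rfloor> < 2^k" by (simp add: floor_less_iff)
  then show ?thesis unfolding dyadic_index_def using y by (simp add: unit_ivl_def nat_less_iff)
qed

lemma dyadic_index_eq_iff:
  assumes "0 \<le> y"
  shows "dyadic_index k y = j \<longleftrightarrow> real j / 2^k \<le> y \<and> y < (real j + 1) / 2^k"
proof -
  have nn: "0 \<le> \<lfloor>2^k * y\<rfloor>" using assms by simp
  have "dyadic_index k y = j \<longleftrightarrow> \<lfloor>2^k * y\<rfloor> = int j" unfolding dyadic_index_def using nn by auto
  also have "\<dots> \<longleftrightarrow> real j \<le> 2^k * y \<and> 2^k * y < real j + 1" by (simp add: floor_eq_iff)
  also have "\<dots> \<longleftrightarrow> real j / 2^k \<le> y \<and> y < (real j + 1) / 2^k"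
    by (simp add: divide_le_eq less_divide_eq mult.commute)
  finally show ?thesis .
qed

lemma dyadic_union_singleton:
  "dyadic_union k {j} = unit_ivl \<inter> {real j / 2^k ..< (real j + 1) / 2^k}"
proof (intro set_eqI iffI)
  fix y assume "y \<in> dyadic_union k {j}"
  then have "y \<in> unit_ivl" "dyadic_index k y = j" by (auto simp: dyadic_union_def)
  then show "y \<in> unit_ivl \<inter> {real j / 2^k ..< (real j + 1) / 2^k}"
    using dyadic_index_eq_iff[of y k j] by (auto simp: unit_ivl_def)
next
  fix y assume y: "y \<in> unit_ivl \<inter> {real j / 2^k ..< (real j + 1) / 2^k}"
  then have "y \<in> unit_ivl" by blast
  then have "0 \<le> y" by (simp add: unit_ivl_def)
  then have "dyadic_index k y = j" using dyadic_index_eq_iff[of y k j] y by auto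
  then show "y \<in> dyadic_union k {j}" using y by (simp add: dyadic_union_def)
qed

lemma dyadic_union_UN: "dyadic_union k J = (\<Union>j\<in>J. dyadic_union k {j})"
  unfolding dyadic_union_def by auto

lemma dyadic_union_sets_lborel: "dyadic_union k J \<in> sets lborel"
proof -
  have "(\<Union>j\<in>J. dyadic_union k {j}) \<in> sets lborel"
    by (intro sets.countable_UN') (auto simp: dyadic_union_singleton unit_ivl_Ico_sets)
  then show ?thesis using dyadic_union_UN[of k J] by metis
qed

lemma dyadic_union_subset: "dyadic_union k J \<subseteq> unit_ivl" by (auto simp: dyadic_union_def)

lemma dyadic_union_sets: "dyadic_union k J \<in> sets lebesgue_unit"
  using dyadic_union_sets_lborel dyadic_union_subset by (simp add: sets_lebesgue_unit_iff)

lemma measure_dyadic_union_singleton: "measure lebesgue_unit (dyadic_union k {j}) \<le> 1 / 2^k"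
proof -
  have "measure lebesgue_unit (dyadic_union k {j}) = measure lborel (dyadic_union k {j})"
    by (rule measure_lebesgue_unit[OF dyadic_union_subset])
  also have "\<dots> \<le> measure lborel {real j / 2^k ..< (real j + 1) / 2^k}"
    by (rule measure_mono_fmeasurable)
      (auto simp: dyadic_union_singleton unit_ivl_Ico_sets intro!: Ico_fmeasurable divide_right_mono)
  also have "\<dots> = (real j + 1) / 2^k - real j / 2^k"
    by (rule measure_lborel_Ico) (simp add: divide_right_mono)
  also have "\<dots> = 1 / 2^k" by (simp add: diff_divide_distrib[symmetric])
  finally show ?thesis .
qed

lemma dyadic_union_Compl: "unit_ivl - dyadic_union k J = dyadic_union k (- J)"
  unfolding dyadic_union_def by auto

lemma dyadic_union_Un: "dyadic_union k J \<union> dyadic_union k J' = dyadic_union k (J \<union> J')"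
  unfolding dyadic_union_def by auto

lemma dyadic_union_lift: "dyadic_union k J = dyadic_union (k + d) {j. j div 2^d \<in> J}"
  unfolding dyadic_union_def using dyadic_index_div by (auto simp: unit_ivl_def)

lemma dyadic_union_Un_common_level:
  "\<exists>J''. dyadic_union k J \<union> dyadic_union k' J' = dyadic_union (k + k') J''"
proof -
  have "dyadic_union k J = dyadic_union (k + k') {j. j div 2^k' \<in> J}" by (rule dyadic_union_lift)
  moreover have "dyadic_union k' J' = dyadic_union (k + k') {j. j div 2^k \<in> J'}"
    using dyadic_union_lift[of k' J' k] by (simp add: add.commute)
  ultimately show ?thesis using dyadic_union_Un by metis
qed

lemma dyadic_union_bounded: "dyadic_union k J = dyadic_union k (J \<inter> {..<2^k})"
  unfolding dyadic_union_def using dyadic_index_less by auto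

lemma dyadic_interval_subset: "dyadic_interval n \<subseteq> unit_ivl" unfolding dyadic_interval_def
  by (rule dyadic_union_subset)

lemma dyadic_interval_sets: "dyadic_interval n \<in> sets lebesgue_unit" unfolding dyadic_interval_def
  by (rule dyadic_union_sets)

lemma dyadic_sigma_sigma: "sigma_algebra unit_ivl dyadic_sigma"
  unfolding dyadic_sigma_def by (rule sigma_algebra_sigma_sets) (use dyadic_interval_subset in auto)

interpretation DS: sigma_algebra unit_ivl dyadic_sigma by (rule dyadic_sigma_sigma)

lemma dyadic_interval_in_sigma: "dyadic_interval n \<in> dyadic_sigma" unfolding dyadic_sigma_def
  by (rule sigma_sets.Basic) simp

lemma dyadic_sigma_sets: "dyadic_sigma \<subseteq> sets lebesgue_unit"
proof -
  interpret L: sigma_algebra unit_ivl "sets lebesgue_unit"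
    using sets.sigma_algebra_axioms[of lebesgue_unit] by (simp add: space_lebesgue_unit)
  show ?thesis unfolding dyadic_sigma_def
    by (rule L.sigma_sets_subset) (auto simp: dyadic_interval_sets)
qed

lemma limsup_intervals_eq:
  "limsup_intervals A = unit_ivl \<inter> (\<Inter>m. \<Union>n\<in>{n \<in> A. m \<le> n}. dyadic_interval n)"
  unfolding limsup_intervals_def infinite_nat_iff_unbounded_le by auto

lemma limsup_intervals_in_sigma: "limsup_intervals A \<in> dyadic_sigma"
proof -
  have "(\<Inter>m. \<Union>n\<in>{n \<in> A. m \<le> n}. dyadic_interval n) \<in> dyadic_sigma"
    by (intro DS.countable_INT DS.countable_UN') (auto simp: dyadic_interval_in_sigma)
  then show ?thesis unfolding limsup_intervals_eq using DS.top DS.Int by blast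
qed

lemma limsup_intervals_mono: "A \<subseteq> B \<Longrightarrow> limsup_intervals A \<subseteq> limsup_intervals B"
proof
  fix y assume AB: "A \<subseteq> B" and y: "y \<in> limsup_intervals A"
  have "{n \<in> A. y \<in> dyadic_interval n} \<subseteq> {n \<in> B. y \<in> dyadic_interval n}" using AB by blast
  then show "y \<in> limsup_intervals B" using y finite_subset unfolding limsup_intervals_def by blast
qed

lemma limsup_intervals_Un: "limsup_intervals (A \<union> B) \<subseteq> limsup_intervals A \<union> limsup_intervals B"
proof
  fix y assume "y \<in> limsup_intervals (A \<union> B)"
  then have y: "y \<in> unit_ivl" "infinite {n \<in> A \<union> B. y \<in> dyadic_interval n}"
    by (auto simp: limsup_intervals_def)
  have "{n \<in> A \<union> B. y \<in> dyadic_interval n}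
      = {n \<in> A. y \<in> dyadic_interval n} \<union> {n \<in> B. y \<in> dyadic_interval n}" by auto
  then show "y \<in> limsup_intervals A \<union> limsup_intervals B" using y
    by (auto simp: limsup_intervals_def)
qed

lemma limsup_intervals_finite: "finite A \<Longrightarrow> limsup_intervals A = {}"
  unfolding limsup_intervals_def by auto

lemma limsup_intervals_empty: "limsup_intervals {} = {}" by (simp add: limsup_intervals_finite)

lemma limsup_intervals_UNIV: "limsup_intervals UNIV = unit_ivl"
proof -
  have "infinite {n. y \<in> dyadic_interval n}" if y: "y \<in> unit_ivl" for y
  proof -
    have "range (\<lambda>k. prod_encode (k, dyadic_index k y)) \<subseteq> {n. y \<in> dyadic_interval n}"
      using y by (auto simp: dyadic_interval_def dyadic_level_def dyadic_offset_def dyadic_union_def)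
    moreover have "infinite (range (\<lambda>k. prod_encode (k, dyadic_index k y)))"
      by (rule range_inj_infinite) (auto simp: inj_def prod_encode_eq)
    ultimately show ?thesis using infinite_super by blast
  qed
  then show ?thesis unfolding limsup_intervals_def by auto
qed

definition intervals_within :: "nat set \<Rightarrow> real set \<Rightarrow> bool" where
  "intervals_within A G \<longleftrightarrow> (\<forall>n\<in>A. dyadic_interval n \<subseteq> G)"

lemma limsup_intervals_subset: "intervals_within A G \<Longrightarrow> limsup_intervals A \<subseteq> G"
proof
  fix y assume c: "intervals_within A G" and y: "y \<in> limsup_intervals A"
  then have "infinite {n \<in> A. y \<in> dyadic_interval n}" by (simp add: limsup_intervals_def)
  then obtain n where "n \<in> A" "y \<in> dyadic_interval n" using not_finite_existsD by blast
  then show "y \<in> G" using c by (auto simp: intervals_within_def)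
qed

interpretation DH: dominated_hom_setup lebesgue_unit dyadic_sigma limsup_intervals
proof (intro dominated_hom_setup.intro prob_space_lebesgue_unit dominated_hom_setup_axioms.intro)
  show "sigma_algebra (space lebesgue_unit) dyadic_sigma"
    by (simp add: space_lebesgue_unit dyadic_sigma_sigma)
  show "dyadic_sigma \<subseteq> sets lebesgue_unit" by (rule dyadic_sigma_sets)
qed (auto simp: limsup_intervals_in_sigma limsup_intervals_mono limsup_intervals_Un
    limsup_intervals_empty limsup_intervals_UNIV space_lebesgue_unit)

text \<open>The measure \<open>\<mu>\<close> on the subsets of omega: the Lebesgue measure of a Boolean homomorphism
  into the measure algebra of \<open>[0,1)\<close> that sends \<open>A\<close> below the set of points lying in infinitely
  many intervals coded by \<open>A\<close>.\<close>
definition dyadic_hom :: "nat set \<Rightarrow> real set" where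
  "dyadic_hom = (SOME h. DH.dominated_hom h)"

lemma dominated_hom_dyadic_hom: "DH.dominated_hom dyadic_hom"
  unfolding dyadic_hom_def by (rule someI_ex[OF DH.sikorski_extension])

lemma dyadic_hom_in_sigma: "dyadic_hom A \<in> dyadic_sigma"
  using dominated_hom_dyadic_hom unfolding DH.dominated_hom_def by blast

lemma dyadic_hom_sets: "dyadic_hom A \<in> sets lebesgue_unit"
  using dyadic_hom_in_sigma dyadic_sigma_sets by blast

lemma dyadic_hom_dominated: "AE x in lebesgue_unit. x \<in> dyadic_hom A \<longrightarrow> x \<in> limsup_intervals A"
  using dominated_hom_dyadic_hom unfolding DH.dominated_hom_def by blast

lemma dyadic_hom_Compl: "AE x in lebesgue_unit. x \<in> dyadic_hom (- A) \<longleftrightarrow> x \<notin> dyadic_hom A"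
  using dominated_hom_dyadic_hom unfolding DH.dominated_hom_def by blast

lemma dyadic_hom_Int:
  "AE x in lebesgue_unit. x \<in> dyadic_hom (A \<inter> B) \<longleftrightarrow> x \<in> dyadic_hom A \<and> x \<in> dyadic_hom B"
  using dominated_hom_dyadic_hom unfolding DH.dominated_hom_def by blast

lemma dyadic_hom_Un:
  "AE x in lebesgue_unit. x \<in> dyadic_hom (A \<union> B) \<longleftrightarrow> x \<in> dyadic_hom A \<or> x \<in> dyadic_hom B"
proof -
  have e: "A \<union> B = - (- A \<inter> - B)" by auto
  show ?thesis
    using dyadic_hom_Compl[of "- A \<inter> - B"] dyadic_hom_Int[of "- A" "- B"]
      dyadic_hom_Compl[of A] dyadic_hom_Compl[of B]
    unfolding e[symmetric] by eventually_elim auto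
qed

lemma dyadic_hom_null: "limsup_intervals A = {} \<Longrightarrow> AE x in lebesgue_unit. x \<notin> dyadic_hom A"
  using dyadic_hom_dominated[of A] by eventually_elim auto

lemma dyadic_hom_Diff:
  "AE x in lebesgue_unit. x \<in> dyadic_hom (A - B) \<longleftrightarrow> x \<in> dyadic_hom A \<and> x \<notin> dyadic_hom B"
proof -
  have e: "A - B = A \<inter> - B" by auto
  show ?thesis using dyadic_hom_Int[of A "- B"] dyadic_hom_Compl[of B] unfolding e[symmetric]
    by eventually_elim auto
qed

lemma dyadic_hom_UNIV: "AE x in lebesgue_unit. x \<in> dyadic_hom UNIV"
  using dyadic_hom_Compl[of UNIV] dyadic_hom_null[OF limsup_intervals_empty] by eventually_elim auto

definition dyadic_mu :: "nat set \<Rightarrow> real" where "dyadic_mu A = measure lebesgue_unit (dyadic_hom A)"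

lemma dyadic_mu_nonneg: "0 \<le> dyadic_mu A" by (simp add: dyadic_mu_def)

lemma dyadic_mu_UNIV: "dyadic_mu UNIV = 1"
proof -
  have "measure lebesgue_unit (dyadic_hom UNIV) = measure lebesgue_unit (space lebesgue_unit)"
    using dyadic_hom_UNIV AE_space
    by (intro measure_eq_AE) (auto simp: dyadic_hom_sets elim: eventually_mono)
  then show ?thesis by (simp add: dyadic_mu_def LU.prob_space)
qed

lemma dyadic_mu_add: "A \<inter> B = {} \<Longrightarrow> dyadic_mu (A \<union> B) = dyadic_mu A + dyadic_mu B"
proof -
  assume d: "A \<inter> B = {}"
  have n: "AE x in lebesgue_unit. x \<notin> dyadic_hom A \<or> x \<notin> dyadic_hom B"
    using dyadic_hom_Int[of A B] dyadic_hom_null[of "A \<inter> B"] d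
    by (auto simp: limsup_intervals_empty elim: eventually_elim2)
  have "measure lebesgue_unit (dyadic_hom (A \<union> B))
      = measure lebesgue_unit (dyadic_hom A \<union> dyadic_hom B)"
    using dyadic_hom_Un[of A B] by (intro measure_eq_AE) (auto simp: dyadic_hom_sets)
  also have "\<dots> = measure lebesgue_unit (dyadic_hom A) + measure lebesgue_unit (dyadic_hom B)"
    using n by (intro measure_Un_AE) (auto simp: LU.fmeasurable_eq_sets dyadic_hom_sets)
  finally show ?thesis by (simp add: dyadic_mu_def)
qed

lemma dyadic_mu_finite: "finite F \<Longrightarrow> dyadic_mu F = 0"
proof -
  assume "finite F"
  then have "AE x in lebesgue_unit. x \<notin> dyadic_hom F" using dyadic_hom_null limsup_intervals_finite
    by blast
  then have "measure lebesgue_unit (dyadic_hom F) \<le> measure lebesgue_unit {}"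
    by (intro LU.finite_measure_mono_AE) (auto elim: eventually_mono)
  then show ?thesis by (simp add: dyadic_mu_def measure_le_0_iff)
qed

lemma dyadic_mu_le_limsup: "dyadic_mu A \<le> measure lebesgue_unit (limsup_intervals A)"
  unfolding dyadic_mu_def using dyadic_hom_dominated limsup_intervals_in_sigma dyadic_sigma_sets
  by (intro LU.finite_measure_mono_AE) auto

definition void_codes :: "nat set" where
  "void_codes = {n. 2 ^ dyadic_level n \<le> dyadic_offset n}"

definition low_codes :: "nat \<Rightarrow> nat set" where
  "low_codes k = {n. dyadic_level n < k \<and> dyadic_offset n < 2 ^ dyadic_level n}"

definition codes_in :: "nat \<Rightarrow> nat \<Rightarrow> nat set" where
  "codes_in k j = {n. k \<le> dyadic_level n \<and> dyadic_offset n < 2 ^ dyadic_level n \<and>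
     dyadic_offset n div 2 ^ (dyadic_level n - k) = j}"

lemma intervals_within_void_codes: "intervals_within void_codes {}"
  unfolding intervals_within_def
proof (intro ballI subsetI)
  fix n y assume n: "n \<in> void_codes" and y: "y \<in> dyadic_interval n"
  then have "y \<in> unit_ivl" "dyadic_index (dyadic_level n) y = dyadic_offset n"
    by (auto simp: dyadic_interval_def dyadic_union_def)
  then have "dyadic_offset n < 2 ^ dyadic_level n" using dyadic_index_less by metis
  then show "y \<in> {}" using n by (simp add: void_codes_def)
qed

lemma finite_low_codes: "finite (low_codes k)"
proof -
  have "low_codes k \<subseteq> prod_encode ` ({..<k} \<times> {..<2^k})"
  proof
    fix n assume n: "n \<in> low_codes k"
    then have "dyadic_level n < k" "dyadic_offset n < 2 ^ dyadic_level n"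
      by (auto simp: low_codes_def)
    moreover have "(2::nat) ^ dyadic_level n < 2 ^ k" using \<open>dyadic_level n < k\<close>
      by (rule power_strict_increasing) simp
    ultimately have "dyadic_offset n < 2 ^ k" by linarith
    moreover have "n = prod_encode (dyadic_level n, dyadic_offset n)"
      by (simp add: dyadic_level_def dyadic_offset_def)
    ultimately show "n \<in> prod_encode ` ({..<k} \<times> {..<2^k})" using \<open>dyadic_level n < k\<close> by blast
  qed
  then show ?thesis by (rule finite_subset) simp
qed

lemma intervals_within_codes_in: "intervals_within (codes_in k j) (dyadic_union k {j})"
  unfolding intervals_within_def
proof (intro ballI subsetI)
  fix n y assume n: "n \<in> codes_in k j" and y: "y \<in> dyadic_interval n"
  then have y': "y \<in> unit_ivl" "dyadic_index (dyadic_level n) y = dyadic_offset n"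
    by (auto simp: dyadic_interval_def dyadic_union_def)
  have "dyadic_index k y = dyadic_index (dyadic_level n) y div 2 ^ (dyadic_level n - k)"
    using n y'(1) by (intro dyadic_index_div_le) (auto simp: codes_in_def unit_ivl_def)
  then show "y \<in> dyadic_union k {j}" using n y' by (auto simp: codes_in_def dyadic_union_def)
qed

lemma codes_decomposition: "UNIV = low_codes k \<union> void_codes \<union> (\<Union>j<2^k. codes_in k j)"
proof -
  have "n \<in> low_codes k \<union> void_codes \<union> (\<Union>j<2^k. codes_in k j)" for n
  proof (cases "2 ^ dyadic_level n \<le> dyadic_offset n")
    case True then show ?thesis by (simp add: void_codes_def)
  next
    case False
    then have il: "dyadic_offset n < 2 ^ dyadic_level n" by simp
    show ?thesis
    proof (cases "dyadic_level n < k")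
      case True then show ?thesis using il by (simp add: low_codes_def)
    next
      case False
      then have kl: "k \<le> dyadic_level n" by simp
      have "dyadic_offset n div 2 ^ (dyadic_level n - k) < 2 ^ k"
      proof -
        have "2 ^ dyadic_level n = 2 ^ k * (2::nat) ^ (dyadic_level n - k)" using kl
          by (simp flip: power_add)
        then show ?thesis using il by (simp add: div_less_iff_less_mult mult.commute)
      qed
      then show ?thesis using il kl by (auto simp: codes_in_def)
    qed
  qed
  then show ?thesis by blast
qed

text \<open>A nonprincipal ultrafilter avoids the finitely many codes of level below \<open>k\<close>, so it contains
  the void codes or the codes lying inside a single interval of level \<open>k\<close>.\<close>
lemma nonprincipal_uf_small_piece:
  assumes p: "p \<in> beta_omega - omega_in_beta"
  shows "\<exists>A G. A \<in> p \<and> intervals_within A G \<and> G \<in> sets lebesgue_unit \<and>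
    measure lebesgue_unit G \<le> 1 / 2^k"
proof -
  have u: "ultrafilter_nat p" and np: "p \<notin> omega_in_beta" using p by (auto simp: beta_omega_def)
  have "- low_codes k \<in> p" using nonprincipal_uf_cofinite[OF u np finite_low_codes] .
  moreover have "- low_codes k \<subseteq> \<Union>(insert void_codes (codes_in k ` {..<2^k}))"
  proof
    fix n assume "n \<in> - low_codes k"
    moreover have "n \<in> low_codes k \<union> void_codes \<union> (\<Union>j<2^k. codes_in k j)"
      using codes_decomposition[of k] by blast
    ultimately show "n \<in> \<Union>(insert void_codes (codes_in k ` {..<2^k}))" by auto
  qed
  ultimately have un: "\<Union>(insert void_codes (codes_in k ` {..<2^k})) \<in> p" by (rule uf_mono[OF u])
  have fin: "finite (insert void_codes (codes_in k ` {..<2^k}))" by simp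
  obtain B where B: "B \<in> insert void_codes (codes_in k ` {..<2^k})" "B \<in> p"
    using uf_Union_finite[OF u fin un] by blast
  show ?thesis
  proof (cases "B = void_codes")
    case True
    then show ?thesis using B intervals_within_void_codes by (intro exI[of _ B] exI[of _ "{}"]) auto
  next
    case False
    then obtain j where "B = codes_in k j" using B by blast
    then show ?thesis
      using B intervals_within_codes_in dyadic_union_sets measure_dyadic_union_singleton
      by (intro exI[of _ B] exI[of _ "dyadic_union k {j}"]) auto
  qed
qed

lemma dyadic_mu_small:
  fixes p :: "nat \<Rightarrow> nat set set"
  assumes p: "\<And>n. p n \<in> beta_omega - omega_in_beta" and e: "0 < e"
  shows "\<exists>A. (\<forall>n. A \<in> p n) \<and> dyadic_mu A < e"
proof -
  obtain m where m: "(1/2::real) ^ m < e / 2" using real_arch_pow_inv[of "e/2" "1/2"] e by auto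
  have "\<forall>n. \<exists>A G. A \<in> p n \<and> intervals_within A G \<and> G \<in> sets lebesgue_unit \<and>
      measure lebesgue_unit G \<le> 1 / 2^(n + m)"
    using nonprincipal_uf_small_piece[OF p] by blast
  then obtain A G where AG: "\<And>n. A n \<in> p n" "\<And>n. intervals_within (A n) (G n)"
    "\<And>n. G n \<in> sets lebesgue_unit" "\<And>n. measure lebesgue_unit (G n) \<le> 1 / 2^(n + m)"
    by metis
  define AA where "AA = (\<Union>n. A n)"
  have "AA \<in> p n" for n
  proof -
    have u: "ultrafilter_nat (p n)" using p[of n] by (auto simp: beta_omega_def)
    show ?thesis unfolding AA_def by (rule uf_mono[OF u AG(1)[of n]]) blast
  qed
  moreover have "dyadic_mu AA < e"
  proof -
    have cov: "intervals_within AA (\<Union>n. G n)"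
      using AG(2) unfolding intervals_within_def AA_def by blast
    have geo: "(\<lambda>n. (1/2::real)^m * (1/2)^n) sums ((1/2)^m * 2)"
      by (intro sums_mult) (simp add: geometric_sums[of "1/2::real", simplified])
    have eq: "(1::real) / 2^(n+m) = (1/2)^m * (1/2)^n" for n by (simp add: power_add power_one_over)
    have gs: "summable (\<lambda>n. (1/2::real)^m * (1/2)^n)" using geo by (rule sums_summable)
    have bnd: "measure lebesgue_unit (G n) \<le> (1/2::real)^m * (1/2)^n" for n
      using AG(4)[of n] eq[of n] by simp
    have summ: "summable (\<lambda>n. measure lebesgue_unit (G n))"
      by (rule summable_comparison_test'[OF gs, of 0]) (use bnd in simp)
    have "dyadic_mu AA \<le> measure lebesgue_unit (limsup_intervals AA)" by (rule dyadic_mu_le_limsup)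
    also have "\<dots> \<le> measure lebesgue_unit (\<Union>n. G n)"
      using limsup_intervals_subset[OF cov] AG(3) by (intro LU.finite_measure_mono) auto
    also have "\<dots> \<le> (\<Sum>n. measure lebesgue_unit (G n))"
      using AG(3) summ by (intro LU.finite_measure_subadditive_countably) auto
    also have "\<dots> \<le> (\<Sum>n. (1/2::real)^m * (1/2)^n)"
      by (rule suminf_le[OF bnd summ gs])
    also have "\<dots> = (1/2)^m * 2" using geo by (simp add: sums_iff)
    finally show ?thesis using m by linarith
  qed
  ultimately show ?thesis by blast
qed

lemma dyadic_mu_small_countable:
  assumes P: "countable P" "P \<subseteq> beta_omega - omega_in_beta" and e: "0 < e"
  shows "\<exists>A. (\<forall>U\<in>P. A \<in> U) \<and> dyadic_mu A < e"
proof (cases "P = {}")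
  case True
  then show ?thesis using dyadic_mu_finite[of "{}"] e by (intro exI[of _ "{}"]) auto
next
  case False
  then have "from_nat_into P n \<in> beta_omega - omega_in_beta" for n
    using from_nat_into P(2) by blast
  then obtain A where A: "\<forall>n. A \<in> from_nat_into P n" "dyadic_mu A < e"
    using dyadic_mu_small e by blast
  have "range (from_nat_into P) = P" using False P(1) by (rule range_from_nat_into)
  then show ?thesis using A by blast
qed

definition dyadic_approximable :: "real set \<Rightarrow> bool" where
  "dyadic_approximable S \<longleftrightarrow>
     (\<forall>e>0. \<exists>k J. measure lebesgue_unit (sym_diff S (dyadic_union k J)) < e)"

lemma dyadic_approximable_empty: "dyadic_approximable {}"
proof -
  have "dyadic_union 0 {} = {}" by (simp add: dyadic_union_def)
  then show ?thesis unfolding dyadic_approximable_def by (metis Diff_empty Un_empty measure_empty)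
qed

lemma dyadic_approximable_closed:
  assumes S: "S \<in> sets lebesgue_unit"
    and close: "\<And>e. 0 < e \<Longrightarrow>
      \<exists>T\<in>sets lebesgue_unit. dyadic_approximable T \<and> measure lebesgue_unit (sym_diff S T) < e"
  shows "dyadic_approximable S"
  unfolding dyadic_approximable_def
proof (intro allI impI)
  fix e :: real assume e: "0 < e"
  then obtain T where T: "T \<in> sets lebesgue_unit" "dyadic_approximable T"
    "measure lebesgue_unit (sym_diff S T) < e / 2"
    using close[of "e / 2"] by auto
  then obtain k J where kJ: "measure lebesgue_unit (sym_diff T (dyadic_union k J)) < e / 2"
    using e unfolding dyadic_approximable_def by (meson half_gt_zero)
  have "sym_diff S (dyadic_union k J) \<subseteq> sym_diff S T \<union> sym_diff T (dyadic_union k J)" by blast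
  then have "measure lebesgue_unit (sym_diff S (dyadic_union k J))
      \<le> measure lebesgue_unit (sym_diff S T \<union> sym_diff T (dyadic_union k J))"
    using S T(1) by (intro LU.finite_measure_mono) (auto intro!: dyadic_union_sets)
  also have "\<dots> \<le> measure lebesgue_unit (sym_diff S T)
      + measure lebesgue_unit (sym_diff T (dyadic_union k J))"
    using S T(1)
    by (intro measure_subadditive) (auto intro!: dyadic_union_sets simp: LU.emeasure_finite)
  finally show "\<exists>k J. measure lebesgue_unit (sym_diff S (dyadic_union k J)) < e"
    using T(3) kJ by (intro exI[of _ k] exI[of _ J]) linarith
qed

lemma dyadic_approximable_Un:
  assumes S: "S \<in> sets lebesgue_unit" "S' \<in> sets lebesgue_unit"
    and a: "dyadic_approximable S" "dyadic_approximable S'"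
  shows "dyadic_approximable (S \<union> S')"
  unfolding dyadic_approximable_def
proof (intro allI impI)
  fix e :: real assume e: "0 < e"
  obtain k J where kJ: "measure lebesgue_unit (sym_diff S (dyadic_union k J)) < e / 2"
    using a(1) e unfolding dyadic_approximable_def by (meson half_gt_zero)
  obtain k' J' where kJ': "measure lebesgue_unit (sym_diff S' (dyadic_union k' J')) < e / 2"
    using a(2) e unfolding dyadic_approximable_def by (meson half_gt_zero)
  obtain J'' where J'': "dyadic_union k J \<union> dyadic_union k' J' = dyadic_union (k + k') J''"
    using dyadic_union_Un_common_level by blast
  have "sym_diff (S \<union> S') (dyadic_union (k + k') J'')
      \<subseteq> sym_diff S (dyadic_union k J) \<union> sym_diff S' (dyadic_union k' J')"
    unfolding J''[symmetric] by blast
  then have "measure lebesgue_unit (sym_diff (S \<union> S') (dyadic_union (k + k') J''))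
      \<le> measure lebesgue_unit (sym_diff S (dyadic_union k J) \<union> sym_diff S' (dyadic_union k' J'))"
    using S by (intro LU.finite_measure_mono) (auto intro!: dyadic_union_sets)
  also have "\<dots> \<le> measure lebesgue_unit (sym_diff S (dyadic_union k J))
      + measure lebesgue_unit (sym_diff S' (dyadic_union k' J'))"
    using S by (intro measure_subadditive) (auto intro!: dyadic_union_sets simp: LU.emeasure_finite)
  finally show "\<exists>k J. measure lebesgue_unit (sym_diff (S \<union> S') (dyadic_union k J)) < e"
    using kJ kJ' by (intro exI[of _ "k + k'"] exI[of _ J'']) linarith
qed

lemma dyadic_approximable_UN_lessThan:
  fixes N :: nat and a :: "nat \<Rightarrow> real set"
  assumes "\<And>i. a i \<in> sets lebesgue_unit" "\<And>i. dyadic_approximable (a i)"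
  shows "dyadic_approximable (\<Union>i<N. a i)"
proof (induction N)
  case 0
  then show ?case by (simp add: dyadic_approximable_empty)
next
  case (Suc N)
  have "(\<Union>i<Suc N. a i) = a N \<union> (\<Union>i<N. a i)" by (simp add: lessThan_Suc)
  then show ?case using dyadic_approximable_Un assms Suc by (simp add: sets.finite_UN)
qed

lemma dyadic_approximable_UN:
  fixes a :: "nat \<Rightarrow> real set"
  assumes as: "\<And>i. a i \<in> sets lebesgue_unit" and approx: "\<And>i. dyadic_approximable (a i)"
  shows "dyadic_approximable (\<Union>i. a i)"
proof (rule dyadic_approximable_closed)
  show Us: "(\<Union>i. a i) \<in> sets lebesgue_unit" using as by auto
  define P where "P N = (\<Union>i<N. a i)" for N
  have Ps: "P N \<in> sets lebesgue_unit" for N unfolding P_def using as by auto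
  have "incseq P" unfolding P_def by (intro monoI UN_mono) auto
  moreover have "(\<Union>N. P N) = (\<Union>i. a i)" unfolding P_def by auto
  ultimately have lim: "(\<lambda>N. measure lebesgue_unit (P N)) \<longlonglongrightarrow> measure lebesgue_unit (\<Union>i. a i)"
    using LU.finite_Lim_measure_incseq[of P] Ps by auto
  fix e :: real assume e: "0 < e"
  obtain N where N: "norm (measure lebesgue_unit (P N) - measure lebesgue_unit (\<Union>i. a i)) < e"
    using LIMSEQ_D[OF lim e] by auto
  have PU: "P N \<subseteq> (\<Union>i. a i)" unfolding P_def by auto
  then have "measure lebesgue_unit (sym_diff (\<Union>i. a i) (P N)) < e"
    using LU.finite_measure_Diff[OF Us Ps PU] N by (simp add: Diff_eq_empty_iff[THEN iffD2])
  moreover have "dyadic_approximable (P N)"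
    unfolding P_def using as approx by (rule dyadic_approximable_UN_lessThan)
  ultimately show "\<exists>T\<in>sets lebesgue_unit. dyadic_approximable T \<and>
      measure lebesgue_unit (sym_diff (\<Union>i. a i) T) < e"
    using Ps by blast
qed

lemma dyadic_approximable_sigma: "S \<in> dyadic_sigma \<Longrightarrow> dyadic_approximable S"
  unfolding dyadic_sigma_def
proof (induction rule: sigma_sets.induct)
  case (Basic a)
  then obtain n where "a = dyadic_interval n" by blast
  then have "sym_diff a (dyadic_union (dyadic_level n) {dyadic_offset n}) = {}"
    by (simp add: dyadic_interval_def)
  then show ?case unfolding dyadic_approximable_def by (metis measure_empty)
next
  case Empty
  then show ?case by (rule dyadic_approximable_empty)
next
  case (Compl a)
  have "a \<subseteq> unit_ivl" using Compl.hyps DS.sets_into_space unfolding dyadic_sigma_def by blast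
  then have "sym_diff (unit_ivl - a) (dyadic_union k (- J)) = sym_diff a (dyadic_union k J)" for k J
    unfolding dyadic_union_Compl[symmetric] using dyadic_union_subset[of k J] by blast
  then show ?case using Compl.IH unfolding dyadic_approximable_def by metis
next
  case (Union a)
  then show ?case
    using dyadic_approximable_UN dyadic_sigma_sets unfolding dyadic_sigma_def by blast
qed

definition codes_in_union :: "nat \<Rightarrow> nat set \<Rightarrow> nat set" where
  "codes_in_union k J = (\<Union>j\<in>J. codes_in k j)"

lemma intervals_within_codes_in_union:
  "intervals_within (codes_in_union k J) (dyadic_union k J)"
  unfolding intervals_within_def codes_in_union_def
proof (intro ballI)
  fix n assume "n \<in> (\<Union>j\<in>J. codes_in k j)"
  then obtain j where j: "j \<in> J" "n \<in> codes_in k j" by blast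
  then have "dyadic_interval n \<subseteq> dyadic_union k {j}"
    using intervals_within_codes_in[of k j] by (auto simp: intervals_within_def)
  also have "\<dots> \<subseteq> dyadic_union k J" using j by (auto simp: dyadic_union_def)
  finally show "dyadic_interval n \<subseteq> dyadic_union k J" .
qed

text \<open>Up to finitely many codes and the void ones, the complement of the codes inside the level-\<open>k\<close>
  intervals indexed by \<open>J\<close> consists of the codes inside the other level-\<open>k\<close> intervals.\<close>
lemma dyadic_hom_codes_in_union:
  "AE x in lebesgue_unit. x \<in> dyadic_hom (codes_in_union k (J \<inter> {..<2^k})) \<longleftrightarrow> x \<in> dyadic_union k J"
proof -
  define J0 where "J0 = J \<inter> {..<2^k}"
  define J1 where "J1 = {..<2^k} - J0"
  have u0: "limsup_intervals (codes_in_union k J0) \<subseteq> dyadic_union k J"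
    using limsup_intervals_subset[OF intervals_within_codes_in_union] dyadic_union_bounded[of k J]
    by (simp add: J0_def)
  have "- codes_in_union k J0 \<subseteq> low_codes k \<union> void_codes \<union> codes_in_union k J1"
    using codes_decomposition[of k] unfolding codes_in_union_def J1_def by blast
  then have "limsup_intervals (- codes_in_union k J0)
      \<subseteq> limsup_intervals (low_codes k \<union> void_codes \<union> codes_in_union k J1)"
    by (rule limsup_intervals_mono)
  also have "\<dots> \<subseteq> limsup_intervals (low_codes k) \<union> limsup_intervals void_codes
      \<union> limsup_intervals (codes_in_union k J1)"
    using limsup_intervals_Un by blast
  also have "\<dots> \<subseteq> dyadic_union k J1"
    using limsup_intervals_finite[OF finite_low_codes]
      limsup_intervals_subset[OF intervals_within_void_codes]
      limsup_intervals_subset[OF intervals_within_codes_in_union] by blast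
  finally have u1: "limsup_intervals (- codes_in_union k J0) \<subseteq> dyadic_union k J1" .
  have "dyadic_index k y \<in> J0" if "y \<in> dyadic_union k J" for y
    using that dyadic_index_less by (auto simp: dyadic_union_def J0_def)
  then have disj: "dyadic_union k J1 \<inter> dyadic_union k J = {}"
    unfolding J1_def dyadic_union_def by auto
  show ?thesis unfolding J0_def[symmetric]
    using dyadic_hom_dominated[of "codes_in_union k J0"] dyadic_hom_dominated[of "- codes_in_union k J0"]
      dyadic_hom_Compl[of "codes_in_union k J0"]
  proof eventually_elim
    case (elim x)
    then show ?case using u0 u1 disj by blast
  qed
qed

definition dyadic_codes :: "nat set set" where
  "dyadic_codes = (\<lambda>(k, J). codes_in_union k J) ` (UNIV \<times> {J. finite J})"

lemma countable_dyadic_codes: "countable dyadic_codes"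
  unfolding dyadic_codes_def
  by (intro countable_image countable_SIGMA) (auto simp: countable_Collect_finite)

lemma dyadic_mu_approx:
  assumes e: "0 < e"
  shows "\<exists>C\<in>dyadic_codes. dyadic_mu (A - C) + dyadic_mu (C - A) < e"
proof -
  obtain k J where kJ: "measure lebesgue_unit (sym_diff (dyadic_hom A) (dyadic_union k J)) < e"
    using dyadic_approximable_sigma[OF dyadic_hom_in_sigma[of A]] e
    unfolding dyadic_approximable_def by blast
  define C where "C = codes_in_union k (J \<inter> {..<2^k})"
  have "C \<in> dyadic_codes" unfolding C_def dyadic_codes_def by auto
  have hC: "AE x in lebesgue_unit. x \<in> dyadic_hom C \<longleftrightarrow> x \<in> dyadic_union k J"
    unfolding C_def by (rule dyadic_hom_codes_in_union)
  have "dyadic_mu (A - C) = measure lebesgue_unit (dyadic_hom A - dyadic_union k J)"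
    unfolding dyadic_mu_def using dyadic_hom_Diff[of A C] hC
    by (intro measure_eq_AE) (auto simp: dyadic_hom_sets dyadic_union_sets elim: eventually_elim2)
  moreover have "dyadic_mu (C - A) = measure lebesgue_unit (dyadic_union k J - dyadic_hom A)"
    unfolding dyadic_mu_def using dyadic_hom_Diff[of C A] hC
    by (intro measure_eq_AE) (auto simp: dyadic_hom_sets dyadic_union_sets elim: eventually_elim2)
  moreover have "measure lebesgue_unit (sym_diff (dyadic_hom A) (dyadic_union k J))
      = measure lebesgue_unit (dyadic_hom A - dyadic_union k J)
        + measure lebesgue_unit (dyadic_union k J - dyadic_hom A)"
    by (intro measure_Un_AE) (auto simp: LU.fmeasurable_eq_sets dyadic_hom_sets dyadic_union_sets)
  ultimately show ?thesis using kJ \<open>C \<in> dyadic_codes\<close> by (intro bexI[of _ C]) linarith+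
qed

section \<open>From a finitely additive measure on omega to a Radon measure on beta omega\<close>

abbreviation beta_borel :: "nat set set set set" where
  "beta_borel \<equiv> borel_sets_of beta_omega_top"

lemma sigma_algebra_beta_borel: "sigma_algebra beta_omega beta_borel"
  unfolding borel_sets_of_def topspace_beta_omega_top
  by (rule sigma_algebra_sigma_sets) (use openin_subset topspace_beta_omega_top in fastforce)

lemma openin_beta_borel: "openin beta_omega_top W \<Longrightarrow> W \<in> beta_borel"
  unfolding borel_sets_of_def by (rule sigma_sets.Basic) simp

lemma closedin_beta_borel:
  assumes K: "closedin beta_omega_top K"
  shows "K \<in> beta_borel"
proof -
  interpret sigma_algebra beta_omega beta_borel by (rule sigma_algebra_beta_borel)
  have "beta_omega - K \<in> beta_borel"
    using K by (intro openin_beta_borel) (simp add: closedin_def topspace_beta_omega_top)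
  moreover have "beta_omega - (beta_omega - K) = K"
    using K closedin_subset topspace_beta_omega_top by fastforce
  ultimately show ?thesis using compl_sets by metis
qed

lemma openin_beta_omega: "openin beta_omega_top beta_omega"
  using openin_topspace[of beta_omega_top] by (simp add: topspace_beta_omega_top)

locale fa_probability =
  fixes \<mu> :: "nat set \<Rightarrow> real"
  assumes mu_nonneg: "0 \<le> \<mu> A" and mu_UNIV: "\<mu> UNIV = 1"
    and mu_add: "A \<inter> B = {} \<Longrightarrow> \<mu> (A \<union> B) = \<mu> A + \<mu> B"
begin

lemma mu_empty: "\<mu> {} = 0"
  using mu_add[of "{}" "{}"] by simp

lemma mu_mono: "A \<subseteq> B \<Longrightarrow> \<mu> A \<le> \<mu> B"
  using mu_add[of A "B - A"] mu_nonneg[of "B - A"] by (simp add: Un_absorb1)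

lemma mu_le_1: "\<mu> A \<le> 1"
  using mu_mono[of A UNIV] mu_UNIV by simp

lemma mu_Un_le: "\<mu> (A \<union> B) \<le> \<mu> A + \<mu> B"
  using mu_add[of A "B - A"] mu_mono[of "B - A" B] by simp

lemma mu_UN_le: "finite I \<Longrightarrow> \<mu> (\<Union>i\<in>I. B i) \<le> (\<Sum>i\<in>I. \<mu> (B i))"
proof (induction I rule: finite_induct)
  case (insert x F)
  then show ?case using mu_Un_le[of "B x" "\<Union>i\<in>F. B i"] by simp
qed (simp add: mu_empty)

text \<open>The measure \<open>\<nu>\<close> is obtained by Caratheodory's method from the outer measure
  \<open>\<nu>*(S) = inf {\<nu>(W) | W open, S \<subseteq> W}\<close>, where the content of an open set \<open>W\<close> is the
  supremum of \<open>\<mu>(A)\<close> over the clopen sets \<open>clopen_of A \<subseteq> W\<close>.\<close>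
definition inner_content :: "nat set set set \<Rightarrow> ennreal" where
  "inner_content W = (SUP A\<in>{A. clopen_of A \<subseteq> W}. ennreal (\<mu> A))"

definition outer_content :: "nat set set set \<Rightarrow> ennreal" where
  "outer_content S = (INF W\<in>{W. openin beta_omega_top W \<and> S \<subseteq> W}. inner_content W)"

lemma inner_content_mono: "W \<subseteq> W' \<Longrightarrow> inner_content W \<le> inner_content W'"
  unfolding inner_content_def by (rule SUP_subset_mono) auto

lemma inner_content_clopen_of: "inner_content (clopen_of A) = ennreal (\<mu> A)"
  unfolding inner_content_def
proof (rule antisym)
  show "(SUP B\<in>{B. clopen_of B \<subseteq> clopen_of A}. ennreal (\<mu> B)) \<le> ennreal (\<mu> A)"
    by (rule SUP_least) (auto simp: clopen_of_subset_iff intro!: ennreal_leI mu_mono)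
  show "ennreal (\<mu> A) \<le> (SUP B\<in>{B. clopen_of B \<subseteq> clopen_of A}. ennreal (\<mu> B))"
    by (rule SUP_upper2[of A]) auto
qed

lemma inner_content_le_1: "inner_content W \<le> 1"
  unfolding inner_content_def by (rule SUP_least) (simp add: mu_le_1)

lemma outer_content_le_inner: "openin beta_omega_top W \<Longrightarrow> S \<subseteq> W \<Longrightarrow> outer_content S \<le> inner_content W"
  unfolding outer_content_def by (rule INF_lower) auto

lemma outer_content_openin: "openin beta_omega_top W \<Longrightarrow> outer_content W = inner_content W"
  using outer_content_le_inner[of W W] unfolding outer_content_def
  by (intro antisym INF_greatest) (auto intro: inner_content_mono)

lemma outer_content_clopen_of: "outer_content (clopen_of A) = ennreal (\<mu> A)"
  using outer_content_openin[OF openin_clopen_of] inner_content_clopen_of by simp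

lemma outer_content_mono: "S \<subseteq> T \<Longrightarrow> outer_content S \<le> outer_content T"
  unfolding outer_content_def by (rule INF_superset_mono) auto

lemma outer_content_le_1: "S \<subseteq> beta_omega \<Longrightarrow> outer_content S \<le> 1"
  using outer_content_le_inner[OF openin_beta_omega] inner_content_le_1 order_trans by blast

lemma outer_content_empty: "outer_content {} = 0"
  using outer_content_clopen_of[of "{}"] by (simp add: clopen_of_empty mu_empty)

lemma outer_content_approx:
  assumes S: "S \<subseteq> beta_omega" and e: "0 < e"
  shows "\<exists>W. openin beta_omega_top W \<and> S \<subseteq> W \<and> inner_content W < outer_content S + ennreal e"
proof -
  have "outer_content S \<noteq> \<top>" using outer_content_le_1[OF S] by (metis ennreal_one_less_top leD)
  then have "outer_content S < outer_content S + ennreal e"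
    using ennreal_add_left_cancel_less[of "outer_content S" 0 "ennreal e"] e by simp
  then show ?thesis unfolding outer_content_def[of S] INF_less_iff by auto
qed

lemma inner_content_UN_le:
  assumes W: "\<And>i. openin beta_omega_top (W i)"
  shows "inner_content (\<Union>i. W i) \<le> (\<Sum>i. inner_content (W i))"
  unfolding inner_content_def[of "\<Union>i. W i"]
proof (rule SUP_least)
  fix A assume "A \<in> {A. clopen_of A \<subseteq> (\<Union>i. W i)}"
  then have "clopen_of A \<subseteq> (\<Union>i. W i)" by simp
  then obtain I B where I: "finite I" and B: "\<And>i. clopen_of (B i) \<subseteq> W i"
    and AB: "A \<subseteq> (\<Union>i\<in>I. B i)"
    by (rule clopen_of_subset_UN_openin[OF W]) (metis that)
  have "\<mu> A \<le> (\<Sum>i\<in>I. \<mu> (B i))" using mu_mono[OF AB] mu_UN_le[OF I] by (rule order_trans)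
  then have "ennreal (\<mu> A) \<le> ennreal (\<Sum>i\<in>I. \<mu> (B i))" by (rule ennreal_leI)
  also have "\<dots> = (\<Sum>i\<in>I. ennreal (\<mu> (B i)))" by (simp add: mu_nonneg sum_nonneg)
  also have "\<dots> \<le> (\<Sum>i\<in>I. inner_content (W i))"
    using B unfolding inner_content_def by (intro sum_mono SUP_upper2) auto
  also have "\<dots> \<le> (\<Sum>i. inner_content (W i))" by (rule sum_le_suminf[OF summableI I]) auto
  finally show "ennreal (\<mu> A) \<le> (\<Sum>i. inner_content (W i))" .
qed

lemma outer_content_countably_subadditive:
  assumes S: "\<And>i. S i \<subseteq> beta_omega"
  shows "outer_content (\<Union>i. S i) \<le> (\<Sum>i. outer_content (S i))"
proof (rule ennreal_le_epsilon)
  fix e :: real assume e: "0 < e"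
  define ee where "ee i = e / 2 * (1/2)^i" for i
  have ee_pos: "0 < ee i" for i using e by (simp add: ee_def)
  have "(\<lambda>i. e / 2 * (1/2::real)^i) sums (e / 2 * 2)"
    by (intro sums_mult) (simp add: geometric_sums[of "1/2::real", simplified])
  then have ees: "ee sums e" unfolding ee_def by simp
  have "\<forall>i. \<exists>W. openin beta_omega_top W \<and> S i \<subseteq> W \<and>
      inner_content W < outer_content (S i) + ennreal (ee i)"
    using outer_content_approx[OF S ee_pos] by blast
  then obtain W where W: "\<And>i. openin beta_omega_top (W i)" "\<And>i. S i \<subseteq> W i"
    "\<And>i. inner_content (W i) < outer_content (S i) + ennreal (ee i)" by metis
  have "outer_content (\<Union>i. S i) \<le> inner_content (\<Union>i. W i)"
    using W(1,2) by (intro outer_content_le_inner) blast+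
  also have "\<dots> \<le> (\<Sum>i. inner_content (W i))" by (rule inner_content_UN_le[OF W(1)])
  also have "\<dots> \<le> (\<Sum>i. outer_content (S i) + ennreal (ee i))"
    by (intro suminf_le summableI less_imp_le W(3))
  also have "\<dots> = (\<Sum>i. outer_content (S i)) + (\<Sum>i. ennreal (ee i))"
    by (rule suminf_add[symmetric]) (auto intro: summableI)
  also have "(\<Sum>i. ennreal (ee i)) = ennreal e"
    using ee_pos ees by (simp add: suminf_ennreal2 less_imp_le sums_summable sums_unique[symmetric])
  finally show "outer_content (\<Union>i. S i) \<le> (\<Sum>i. outer_content (S i)) + ennreal e" .
qed

lemma outer_measure_space_outer_content: "outer_measure_space (Pow beta_omega) outer_content"
  unfolding outer_measure_space_def positive_def increasing_def countably_subadditive_def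
proof (intro conjI ballI impI allI)
  show "outer_content {} = 0" by (rule outer_content_empty)
  show "outer_content x \<le> outer_content y" if "x \<subseteq> y" for x y using outer_content_mono that by blast
  fix A :: "nat \<Rightarrow> nat set set set" assume "range A \<subseteq> Pow beta_omega"
  then show "outer_content (\<Union>i. A i) \<le> (\<Sum>i. outer_content (A i))"
    by (intro outer_content_countably_subadditive) auto
qed

lemma inner_content_split:
  assumes "clopen_of A \<subseteq> V"
  shows "ennreal (\<mu> A) + inner_content (V \<inter> clopen_of (- A)) \<le> inner_content V"
proof -
  have "ennreal (\<mu> A) + inner_content (V \<inter> clopen_of (- A))
      = (SUP C\<in>{C. clopen_of C \<subseteq> V \<inter> clopen_of (- A)}. ennreal (\<mu> A) + ennreal (\<mu> C))"
    unfolding inner_content_def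
    by (subst ennreal_SUP_add_right) (auto simp: clopen_of_empty intro!: exI[of _ "{}"])
  also have "\<dots> \<le> inner_content V"
  proof (rule SUP_least)
    fix C assume "C \<in> {C. clopen_of C \<subseteq> V \<inter> clopen_of (- A)}"
    then have C: "clopen_of C \<subseteq> V" "A \<inter> C = {}"
      using clopen_of_subset_iff[of C "- A"] by auto
    have "clopen_of (A \<union> C) \<subseteq> V" using assms C(1) by (auto simp: clopen_of_Un)
    then have "ennreal (\<mu> (A \<union> C)) \<le> inner_content V"
      unfolding inner_content_def by (auto intro!: SUP_upper2[of "A \<union> C"])
    then show "ennreal (\<mu> A) + ennreal (\<mu> C) \<le> inner_content V"
      using mu_add[OF C(2)] mu_nonneg[of A] mu_nonneg[of C] by (simp add: ennreal_plus)
  qed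
  finally show ?thesis .
qed

lemma openin_caratheodory:
  assumes W: "openin beta_omega_top W"
  shows "W \<in> lambda_system beta_omega (Pow beta_omega) outer_content"
  unfolding lambda_system_def
proof (intro CollectI conjI ballI)
  show "W \<in> Pow beta_omega" using W openin_subset topspace_beta_omega_top by fastforce
  fix x assume x: "x \<in> Pow beta_omega"
  interpret ring_of_sets beta_omega "Pow beta_omega" by (rule algebra.axioms(1)[OF algebra_Pow])
  have "subadditive (Pow beta_omega) outer_content"
    using outer_measure_space_outer_content
    by (intro countably_subadditive_subadditive) (auto simp: outer_measure_space_def)
  then have "outer_content ((W \<inter> x) \<union> ((beta_omega - W) \<inter> x))
      \<le> outer_content (W \<inter> x) + outer_content ((beta_omega - W) \<inter> x)"
    using x by (intro subadditiveD) auto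
  moreover have "(W \<inter> x) \<union> ((beta_omega - W) \<inter> x) = x" using x by auto
  ultimately have "outer_content x \<le> outer_content (W \<inter> x) + outer_content ((beta_omega - W) \<inter> x)"
    by simp
  moreover have "outer_content (W \<inter> x) + outer_content ((beta_omega - W) \<inter> x) \<le> outer_content x"
    unfolding outer_content_def[of x]
  proof (rule INF_greatest)
    fix V assume "V \<in> {W. openin beta_omega_top W \<and> x \<subseteq> W}"
    then have V: "openin beta_omega_top V" "x \<subseteq> V" by auto
    define c where "c = outer_content ((beta_omega - W) \<inter> x)"
    have c: "ennreal (\<mu> A) + c \<le> inner_content V" if A: "clopen_of A \<subseteq> V \<inter> W" for A
    proof -
      have "(beta_omega - W) \<inter> x \<subseteq> V \<inter> clopen_of (- A)" using V(2) A x
        by (auto simp: clopen_of_Compl)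
      then have "c \<le> inner_content (V \<inter> clopen_of (- A))"
        unfolding c_def using V(1) openin_clopen_of by (intro outer_content_le_inner) blast+
      then show ?thesis using inner_content_split[of A V] A
        by (meson add_left_mono le_infE order_trans)
    qed
    have "outer_content (W \<inter> x) + c \<le> inner_content (V \<inter> W) + c"
      using V W by (intro add_right_mono outer_content_le_inner) auto
    also have "\<dots> = (SUP A\<in>{A. clopen_of A \<subseteq> V \<inter> W}. ennreal (\<mu> A) + c)"
      unfolding inner_content_def
      by (subst ennreal_SUP_add_left) (auto simp: clopen_of_empty intro!: exI[of _ "{}"])
    also have "\<dots> \<le> inner_content V" by (rule SUP_least) (use c in auto)
    finally show "outer_content (W \<inter> x) + c \<le> inner_content V" .
  qed
  ultimately show "outer_content (W \<inter> x) + outer_content ((beta_omega - W) \<inter> x) = outer_content x"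
    by (rule antisym[rotated])
qed

lemma measure_space_outer_content: "measure_space beta_omega beta_borel outer_content"
proof -
  interpret P: sigma_algebra beta_omega "Pow beta_omega" by (rule sigma_algebra_Pow)
  have ms: "measure_space beta_omega
      (lambda_system beta_omega (Pow beta_omega) outer_content) outer_content"
    by (rule P.caratheodory_lemma[OF outer_measure_space_outer_content])
  then interpret L: sigma_algebra beta_omega "lambda_system beta_omega (Pow beta_omega) outer_content"
    by (simp add: measure_space_def)
  have "beta_borel \<subseteq> lambda_system beta_omega (Pow beta_omega) outer_content"
    unfolding borel_sets_of_def topspace_beta_omega_top
    by (rule L.sigma_sets_subset) (auto intro: openin_caratheodory)
  then show ?thesis by (rule measure_down[OF ms sigma_algebra_beta_borel])
qed

definition nu :: "nat set set measure" where
  "nu = measure_of beta_omega beta_borel outer_content"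

lemma space_nu: "space nu = beta_omega"
  unfolding nu_def using sigma_algebra_beta_borel by (simp add: sigma_algebra.space_measure_of_eq)

lemma sets_nu: "sets nu = beta_borel"
  unfolding nu_def using sigma_algebra_beta_borel by (simp add: sigma_algebra.sets_measure_of_eq)

lemma emeasure_nu: "B \<in> beta_borel \<Longrightarrow> emeasure nu B = outer_content B"
  unfolding nu_def using measure_space_outer_content
  by (intro emeasure_measure_of_sigma) (auto simp: measure_space_def)

lemma prob_space_nu: "prob_space nu"
proof (rule prob_spaceI)
  have "emeasure nu beta_omega = inner_content (clopen_of UNIV)"
    using emeasure_nu openin_beta_borel[OF openin_beta_omega] outer_content_openin[OF openin_beta_omega]
    by (simp add: clopen_of_UNIV)
  then show "emeasure nu (space nu) = 1" by (simp add: space_nu inner_content_clopen_of mu_UNIV)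
qed

end

definition simple_clopen :: "(real \<times> nat set) list \<Rightarrow> nat set set \<Rightarrow> real" where
  "simple_clopen l x = (\<Sum>(c, C)\<leftarrow>l. c * indicator (clopen_of C) x)"

lemma simple_clopen_append: "simple_clopen (l @ l') x = simple_clopen l x + simple_clopen l' x"
  by (simp add: simple_clopen_def)

sublocale fa_probability \<subseteq> nu: prob_space nu
  by (rule prob_space_nu)

context fa_probability
begin

lemma outer_content_eq_measure: "B \<in> beta_borel \<Longrightarrow> outer_content B = ennreal (measure nu B)"
  using emeasure_nu[of B] nu.emeasure_eq_measure[of B] by simp

lemma clopen_of_in_sets_nu: "clopen_of A \<in> sets nu"
  by (simp add: sets_nu openin_beta_borel[OF openin_clopen_of])

lemma measure_nu_clopen_of: "measure nu (clopen_of A) = \<mu> A"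
  using outer_content_eq_measure[OF openin_beta_borel[OF openin_clopen_of]] outer_content_clopen_of
  by (simp add: mu_nonneg)

lemma measure_nu_outer_regular:
  assumes B: "B \<in> sets nu" and d: "0 < d"
  shows "\<exists>W. openin beta_omega_top W \<and> B \<subseteq> W \<and> measure nu W < measure nu B + d"
proof -
  have "B \<subseteq> beta_omega" using sets.sets_into_space[OF B] by (simp add: space_nu)
  then obtain W where W: "openin beta_omega_top W" "B \<subseteq> W"
    "inner_content W < outer_content B + ennreal d"
    using outer_content_approx d by blast
  then have "ennreal (measure nu W) < ennreal (measure nu B + d)"
    using outer_content_openin[OF W(1)] outer_content_eq_measure[OF openin_beta_borel[OF W(1)]]
      outer_content_eq_measure B d by (simp add: sets_nu ennreal_plus)
  then show ?thesis using W(1,2) by (auto simp: ennreal_less_iff)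
qed

lemma measure_nu_inner_regular:
  assumes B: "B \<in> sets nu" and d: "0 < d"
  shows "\<exists>K. compactin beta_omega_top K \<and> K \<subseteq> B \<and> measure nu B - d < measure nu K"
proof -
  have "beta_omega - B \<in> sets nu" using sets.compl_sets[OF B] by (simp add: space_nu)
  then obtain W where W: "openin beta_omega_top W" "beta_omega - B \<subseteq> W"
    "measure nu W < measure nu (beta_omega - B) + d"
    using measure_nu_outer_regular d by blast
  have "closedin beta_omega_top (beta_omega - W)"
    using W(1) by (simp add: closedin_def topspace_beta_omega_top double_diff openin_subset
        flip: topspace_beta_omega_top)
  moreover have "beta_omega - W \<subseteq> B" using W(2) by blast
  moreover have "measure nu (beta_omega - W) = 1 - measure nu W"
    using nu.prob_compl[of W] openin_beta_borel[OF W(1)] by (simp add: sets_nu space_nu)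
  moreover have "measure nu (beta_omega - B) = 1 - measure nu B"
    using nu.prob_compl[of B] B by (simp add: space_nu)
  ultimately show ?thesis using W(3) compactin_iff_closedin_beta_omega_top
    by (intro exI[of _ "beta_omega - W"]) auto
qed

lemma radon_probability_nu: "radon_probability beta_omega_top nu"
  unfolding radon_probability_def
proof (intro conjI ballI)
  show "prob_space nu" by (rule prob_space_nu)
  show "space nu = topspace beta_omega_top" by (simp add: space_nu topspace_beta_omega_top)
  show "sets nu = borel_sets_of beta_omega_top" by (rule sets_nu)
  fix B assume B: "B \<in> sets nu"
  define \<K> where "\<K> = {K. compactin beta_omega_top K \<and> K \<subseteq> B}"
  have "{} \<in> \<K>" unfolding \<K>_def by simp
  have le: "measure nu K \<le> measure nu B" if "K \<in> \<K>" for K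
    using that B compactin_iff_closedin_beta_omega_top closedin_beta_borel
    by (intro nu.finite_measure_mono) (auto simp: \<K>_def sets_nu)
  then have bdd: "bdd_above (measure nu ` \<K>)" by (intro bdd_aboveI) blast
  show "measure nu B = (SUP K\<in>\<K>. measure nu K)"
  proof (rule antisym)
    show "measure nu B \<le> (SUP K\<in>\<K>. measure nu K)"
    proof (rule field_le_epsilon)
      fix d :: real assume "0 < d"
      then obtain K where "K \<in> \<K>" "measure nu B - d < measure nu K"
        using measure_nu_inner_regular[OF B] unfolding \<K>_def by blast
      moreover have "measure nu K \<le> (SUP K\<in>\<K>. measure nu K)"
        using \<open>K \<in> \<K>\<close> bdd by (rule cSUP_upper)
      ultimately show "measure nu B \<le> (SUP K\<in>\<K>. measure nu K) + d" by linarith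
    qed
    show "(SUP K\<in>\<K>. measure nu K) \<le> measure nu B"
      using \<open>{} \<in> \<K>\<close> le by (intro cSUP_least) auto
  qed
qed

lemma measure_nu_remainder:
  assumes "\<And>F. finite F \<Longrightarrow> \<mu> F = 0"
  shows "measure nu (beta_omega - omega_in_beta) = 1"
proof -
  have "outer_content (\<Union>n. clopen_of {n}) \<le> (\<Sum>n. outer_content (clopen_of {n}))"
    by (rule outer_content_countably_subadditive) (rule clopen_of_subset)
  also have "\<dots> = 0" by (simp add: outer_content_clopen_of assms)
  finally have "measure nu omega_in_beta = 0"
    using outer_content_eq_measure[OF openin_beta_borel[OF openin_omega_in_beta]]
    by (simp add: omega_in_beta_eq)
  then show ?thesis
    using nu.prob_compl[of omega_in_beta] openin_beta_borel[OF openin_omega_in_beta]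
    by (simp add: sets_nu space_nu)
qed

lemma measure_nu_separable_closed:
  assumes small: "\<And>P e. countable P \<Longrightarrow> P \<subseteq> beta_omega - omega_in_beta \<Longrightarrow> 0 < e \<Longrightarrow>
      \<exists>A. (\<forall>U\<in>P. A \<in> U) \<and> \<mu> A < e"
    and F: "closedin beta_omega_top F" "F \<subseteq> beta_omega - omega_in_beta"
      "separable_space (subtopology beta_omega_top F)"
  shows "measure nu F = 0"
proof -
  have "F \<subseteq> topspace beta_omega_top" using F(1) by (rule closedin_subset)
  then obtain C where C: "countable C" "C \<subseteq> F" "F \<subseteq> beta_omega_top closure_of C"
    using separable_space_subtopology_dense[OF F(3)] by blast
  have le: "measure nu F \<le> 0 + e" if e: "0 < e" for e
  proof -
    have "C \<subseteq> beta_omega - omega_in_beta" using C(2) F(2) by blast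
    then obtain A where A: "\<forall>U\<in>C. A \<in> U" "\<mu> A < e" using small[OF C(1) _ e] by blast
    then have "C \<subseteq> clopen_of A" using C(2) F(2) by (auto simp: clopen_of_def)
    then have "F \<subseteq> clopen_of A" using C(3) closure_of_minimal[OF _ closedin_clopen_of] by blast
    then have "measure nu F \<le> measure nu (clopen_of A)"
      using closedin_beta_borel[OF F(1)] clopen_of_in_sets_nu
      by (intro nu.finite_measure_mono) (auto simp: sets_nu)
    then show ?thesis using A(2) measure_nu_clopen_of by simp
  qed
  have "measure nu F \<le> 0" using le by (rule field_le_epsilon)
  then show ?thesis using measure_nonneg[of nu F] by linarith
qed

lemma measure_nu_sym_diff_clopen:
  assumes A: "A \<in> sets nu" and d: "0 < d"
  shows "\<exists>A'. measure nu (sym_diff A (clopen_of A')) < d"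
proof -
  obtain K where K: "compactin beta_omega_top K" "K \<subseteq> A" "measure nu A - d/2 < measure nu K"
    using measure_nu_inner_regular[OF A, of "d/2"] d by auto
  obtain W where W: "openin beta_omega_top W" "A \<subseteq> W" "measure nu W < measure nu A + d/2"
    using measure_nu_outer_regular[OF A, of "d/2"] d by auto
  obtain A' where A': "K \<subseteq> clopen_of A'" "clopen_of A' \<subseteq> W"
    using compactin_clopen_between[OF K(1) W(1)] K(2) W(2) by blast
  have KB: "K \<in> sets nu"
    using K(1) compactin_iff_closedin_beta_omega_top closedin_beta_borel by (simp add: sets_nu)
  have WB: "W \<in> sets nu" using openin_beta_borel[OF W(1)] by (simp add: sets_nu)
  have "measure nu (sym_diff A (clopen_of A')) \<le> measure nu (W - K)"
    using A' K(2) W(2) KB WB A clopen_of_in_sets_nu by (intro nu.finite_measure_mono) auto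
  also have "\<dots> = measure nu W - measure nu K"
    using K(2) W(2) by (intro nu.finite_measure_Diff[OF WB KB]) blast
  finally show ?thesis using K(3) W(3) by (intro exI[of _ A']) linarith
qed

lemma measure_nu_sym_diff_clopen_of:
  "measure nu (sym_diff (clopen_of A) (clopen_of C)) = \<mu> (A - C) + \<mu> (C - A)"
proof -
  have "sym_diff (clopen_of A) (clopen_of C) = clopen_of (A - C) \<union> clopen_of (C - A)"
    by (simp add: clopen_of_Diff)
  moreover have "measure nu (clopen_of (A - C) \<union> clopen_of (C - A))
      = measure nu (clopen_of (A - C)) + measure nu (clopen_of (C - A))"
    by (rule nu.finite_measure_Union[OF clopen_of_in_sets_nu clopen_of_in_sets_nu])
      (auto simp: clopen_of_Diff)
  ultimately show ?thesis by (simp add: measure_nu_clopen_of)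
qed

context
  fixes \<C> :: "nat set set"
  assumes dense: "\<And>A e. 0 < e \<Longrightarrow> \<exists>C\<in>\<C>. \<mu> (A - C) + \<mu> (C - A) < e"
begin

lemma measure_nu_sym_diff_dense:
  assumes A: "A \<in> sets nu" and d: "0 < d"
  shows "\<exists>C\<in>\<C>. measure nu (sym_diff A (clopen_of C)) < d"
proof -
  obtain A' where A': "measure nu (sym_diff A (clopen_of A')) < d/2"
    using measure_nu_sym_diff_clopen[OF A, of "d/2"] d by auto
  obtain C where C: "C \<in> \<C>" "\<mu> (A' - C) + \<mu> (C - A') < d/2" using dense[of "d/2" A'] d by auto
  have "sym_diff A (clopen_of C) \<subseteq> sym_diff A (clopen_of A') \<union> sym_diff (clopen_of A') (clopen_of C)"
    by blast
  then have "measure nu (sym_diff A (clopen_of C))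
      \<le> measure nu (sym_diff A (clopen_of A') \<union> sym_diff (clopen_of A') (clopen_of C))"
    using A clopen_of_in_sets_nu by (intro nu.finite_measure_mono) auto
  also have "\<dots> \<le> measure nu (sym_diff A (clopen_of A'))
      + measure nu (sym_diff (clopen_of A') (clopen_of C))"
    using A clopen_of_in_sets_nu
    by (intro measure_subadditive) (auto simp: nu.emeasure_finite less_top[symmetric])
  finally show ?thesis using A' C measure_nu_sym_diff_clopen_of[of A' C]
    by (intro bexI[of _ C]) auto
qed


definition dense_simple :: "(nat set set \<Rightarrow> real) set" where
  "dense_simple = simple_clopen ` lists (\<rat> \<times> \<C>)"

lemma integrable_simple_clopen: "integrable nu (simple_clopen l)"
proof (induction l)
  case Nil
  then show ?case by (simp add: simple_clopen_def)
next
  case (Cons a l)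
  have "integrable nu (indicator (clopen_of (snd a)) :: _ \<Rightarrow> real)"
    using clopen_of_in_sets_nu by (simp add: nu.emeasure_finite less_top[symmetric])
  then have "integrable nu (\<lambda>x. fst a * indicator (clopen_of (snd a)) x + simple_clopen l x)"
    using Cons.IH by (intro Bochner_Integration.integrable_add integrable_mult_right)
  then show ?case by (simp add: simple_clopen_def split_beta)
qed

lemma l1_approximable_clopen_of:
  assumes "C \<in> \<C>"
  shows "l1_approximable nu dense_simple (\<lambda>x. indicator (clopen_of C) x *\<^sub>R c)"
  unfolding l1_approximable_def
proof (intro allI impI)
  fix e :: real assume "0 < e"
  then obtain r where "r \<in> \<rat>" "c < r" "r < c + e" using Rats_dense_in_real[of c "c + e"] by auto
  then have r: "r \<in> \<rat>" "\<bar>c - r\<bar> < e" by auto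
  have "(\<lambda>x. \<bar>indicator (clopen_of C) x *\<^sub>R c - simple_clopen [(r, C)] x\<bar>)
      = (\<lambda>x. \<bar>c - r\<bar> * indicator (clopen_of C) x)"
    by (auto simp: simple_clopen_def indicator_def)
  then have "(\<integral>x. \<bar>indicator (clopen_of C) x *\<^sub>R c - simple_clopen [(r, C)] x\<bar> \<partial>nu)
      = \<bar>c - r\<bar> * measure nu (clopen_of C)"
    using clopen_of_in_sets_nu by simp
  also have "\<dots> \<le> \<bar>c - r\<bar>" using nu.prob_le_1 by (simp add: mult_left_le)
  finally show "\<exists>h\<in>dense_simple. (\<integral>x. \<bar>indicator (clopen_of C) x *\<^sub>R c - h x\<bar> \<partial>nu) < e"
    using r assms unfolding dense_simple_def by (intro bexI[of _ "simple_clopen [(r, C)]"]) auto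
qed

lemma l1_approximable_indicator:
  assumes A: "A \<in> sets nu"
  shows "l1_approximable nu dense_simple (\<lambda>x. indicator A x *\<^sub>R c)"
proof (rule l1_approximable_closed)
  show "integrable nu h" if "h \<in> dense_simple" for h
    using that integrable_simple_clopen unfolding dense_simple_def by blast
  show "integrable nu (\<lambda>x. indicator A x *\<^sub>R c)"
    using A by (simp add: nu.emeasure_finite less_top[symmetric])
  fix e :: real assume "0 < e"
  then obtain C where C: "C \<in> \<C>" "measure nu (sym_diff A (clopen_of C)) < e / (\<bar>c\<bar> + 1)"
    using measure_nu_sym_diff_dense[OF A]
    by (meson divide_pos_pos abs_ge_zero add_nonneg_pos zero_less_one)
  have "(\<lambda>x. \<bar>indicator A x *\<^sub>R c - indicator (clopen_of C) x *\<^sub>R c\<bar>)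
      = (\<lambda>x. \<bar>c\<bar> * indicator (sym_diff A (clopen_of C)) x)"
    by (auto simp: indicator_def)
  moreover have "sym_diff A (clopen_of C) \<in> sets nu" using A clopen_of_in_sets_nu by auto
  ultimately have "(\<integral>x. \<bar>indicator A x *\<^sub>R c - indicator (clopen_of C) x *\<^sub>R c\<bar> \<partial>nu)
      = \<bar>c\<bar> * measure nu (sym_diff A (clopen_of C))"
    by simp
  also have "\<dots> \<le> \<bar>c\<bar> * (e / (\<bar>c\<bar> + 1))" using C(2) by (intro mult_left_mono) auto
  also have "\<dots> < e" using \<open>0 < e\<close> by (simp add: field_simps)
  finally show "\<exists>g. integrable nu g \<and> l1_approximable nu dense_simple g \<and>
      (\<integral>x. \<bar>indicator A x *\<^sub>R c - g x\<bar> \<partial>nu) < e"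
    using l1_approximable_clopen_of[OF C(1)] clopen_of_in_sets_nu
    by (intro exI[of _ "\<lambda>x. indicator (clopen_of C) x *\<^sub>R c"])
      (auto simp: nu.emeasure_finite less_top[symmetric])
qed

lemma countable_type_nu:
  assumes "countable \<C>"
  shows "countable_type nu"
proof (rule countable_typeI)
  show "countable dense_simple"
    unfolding dense_simple_def using assms countable_rat
    by (intro countable_image countable_lists) auto
  show "integrable nu h" if "h \<in> dense_simple" for h
    using that integrable_simple_clopen unfolding dense_simple_def by blast
  show "(\<lambda>x. h x + h' x) \<in> dense_simple" if hh': "h \<in> dense_simple" "h' \<in> dense_simple" for h h'
  proof -
    obtain l l' where "l \<in> lists (\<rat> \<times> \<C>)" "l' \<in> lists (\<rat> \<times> \<C>)"
      "h = simple_clopen l" "h' = simple_clopen l'"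
      using hh' unfolding dense_simple_def by blast
    then show ?thesis unfolding dense_simple_def
      by (intro image_eqI[of _ _ "l @ l'"]) (auto simp: fun_eq_iff simple_clopen_append)
  qed
qed (rule l1_approximable_indicator)

end

end

interpretation dyadic: fa_probability dyadic_mu
  by unfold_locales (auto simp: dyadic_mu_nonneg dyadic_mu_UNIV dyadic_mu_add)

theorem theorem3p2:
  shows "\<exists>\<nu> :: nat set set measure.
           radon_probability beta_omega_top \<nu> \<and>
           countable_type \<nu> \<and>
           measure \<nu> (beta_omega - omega_in_beta) = 1 \<and>
           (\<forall>F. closedin beta_omega_top F \<and> F \<subseteq> beta_omega - omega_in_beta \<and>
                separable_space (subtopology beta_omega_top F) \<longrightarrow> measure \<nu> F = 0)"
proof (intro exI[of _ dyadic.nu] conjI allI impI)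
  show "radon_probability beta_omega_top dyadic.nu" by (rule dyadic.radon_probability_nu)
  show "countable_type dyadic.nu"
    using dyadic_mu_approx countable_dyadic_codes by (rule dyadic.countable_type_nu)
  show "measure dyadic.nu (beta_omega - omega_in_beta) = 1"
    using dyadic_mu_finite by (rule dyadic.measure_nu_remainder)
  fix F
  assume "closedin beta_omega_top F \<and> F \<subseteq> beta_omega - omega_in_beta \<and>
    separable_space (subtopology beta_omega_top F)"
  then show "measure dyadic.nu F = 0"
    using dyadic.measure_nu_separable_closed[OF dyadic_mu_small_countable] by blast
qed

end
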